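(* Let $G$ be a finite unitary reflection group on $V$ with an $A$-root system $(\Sigma,f)$, and let $P$ be a parabolic subgroup of $G$ of Coxeter type. Let $\Sigma_P$ be the set of $a\in\Sigma$ such that $\mathbb{C}a$ is the root line of some reflection in $P$. Assume: (Hypothesis 1) there is a subset $\Phi\subseteq\Sigma_P$ which is a root system of the Coxeter group $P$, i.e. $(a,b)\in\mathbb{R}$ for all $a,b\in\Phi$, $\Phi\cap\mathbb{R}a=\{\pm a\}$ and $r_a(\Phi)=\Phi$ for all $a\in\Phi$ (where $r_a$ is the reflection of order 2 with root $a$), and $P$ is generated by $\{r_a:a\in\Phi\}$, these being exactly the reflections of $P$; (Hypothesis 2) the group of roots of unity in $A$ is $\langle-1\rangle\times\langle\gamma\rangle$ where $\gamma$ has odd order $h$. Let $\Delta$ be a simple system of $\Phi$ and put $\widetilde\Delta=\bigcup_{i=0}^{h-1}\gamma^i\Delta$. Then the setwise stabiliser $G_{\widetilde\Delta}=\{g\in G: g(\widetilde\Delta)=\widetilde\Delta\}$ is a complement to $P$ in $N_G(P)$.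
   Context: $V$ is a finite-dimensional complex vector space with a positive definite Hermitian form $(-,-)$. A reflection is a finite-order linear map of $V$ whose fixed space is a hyperplane; a unitary reflection group is a finite group of form-preserving linear maps generated by reflections. For a non-zero $a\in V$ and root of unity $\zeta\neq1$, $r_{a,\zeta}(v)=v-(1-\zeta)\frac{(v,a)}{(a,a)}a$. A parabolic subgroup is the pointwise stabiliser in $G$ of a subset of $V$. $P$ is of Coxeter type if it is generated by a set $S$ of reflections such that $(P,S)$ is a Coxeter system. $A$-root system: let $F$ be a finite abelian extension of $\mathbb{Q}$ with ring of integers $A$ and group of roots of unity $\boldsymbol\mu$, and $U$ an $F$-space with Hermitian product such that $V=\mathbb{C}\otimes_FU$. An $A$-root system for $G$ is a pair $(\Sigma,f)$ with $\Sigma\subseteq U$ spanning $U$, $0\notin\Sigma$, $f:\Sigma\to\boldsymbol\mu$, such that $G$ is generated by $\{r_{a,f(a)}:a\in\Sigma\}$ and: (i) for $a\in\Sigma$, $\lambda\in F$: $\lambda a\in\Sigma$ iff $\lambda\in\boldsymbol\mu$; (ii) $f(\lambda a)=f(a)\ne1$ for $\lambda\in\boldsymbol\mu$; (iii) $(1-f(b))(a,b)/(b,b)\in A$ for $a,b\in\Sigma$; (iv) $r_{a,f(a)}(b)\in\Sigma$ and $f(r_{a,f(a)}(b))=f(b)$. A simple system $\Delta$ of $\Phi$ is a subset forming a basis of the real span of $\Phi$ such that every element of $\Phi$ is a linear combination of $\Delta$ with all coefficients $\ge0$ or all $\le0$. A complement to $P$ in $N_G(P)$ is a subgroup $H$ with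 $N_G(P)=PH$ and $P\cap H=1$. *)

theory Defs
  imports "HOL-Analysis.Analysis" "HOL-Computational_Algebra.Polynomial"
          "HOL-Algebra.Generated_Groups" "HOL-Algebra.Multiplicative_Group"
begin

type_synonym 'n cvec = "complex ^ 'n"
type_synonym 'n cmap = "complex ^ 'n \<Rightarrow> complex ^ 'n"

definition herm_form :: "('n::finite cvec \<Rightarrow> 'n cvec \<Rightarrow> complex) \<Rightarrow> bool" where
  "herm_form B \<longleftrightarrow>
     (\<forall>x y z. B (x + y) z = B x z + B y z) \<and>
     (\<forall>c x y. B (c *s x) y = c * B x y) \<and>
     (\<forall>x y. B y x = cnj (B x y)) \<and>
     (\<forall>x. x \<noteq> 0 \<longrightarrow> Re (B x x) > 0)"

definition clinear :: "'n::finite cmap \<Rightarrow> bool" where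
  "clinear g \<longleftrightarrow> Vector_Spaces.linear (*s) (*s) g"

definition fixed_space :: "'n::finite cmap \<Rightarrow> 'n cvec set" where
  "fixed_space g = {v. g v = v}"

definition is_reflection :: "'n::finite cmap \<Rightarrow> bool" where
  "is_reflection g \<longleftrightarrow> clinear g \<and> (\<exists>k>0. (g ^^ k) = id) \<and>
     vec.dim (fixed_space g) = CARD('n) - 1"

definition form_preserving :: "('n::finite cvec \<Rightarrow> 'n cvec \<Rightarrow> complex) \<Rightarrow> 'n cmap \<Rightarrow> bool" where
  "form_preserving B g \<longleftrightarrow> (\<forall>u v. B (g u) (g v) = B u v)"

inductive_set gen_by :: "('a \<Rightarrow> 'a) set \<Rightarrow> ('a \<Rightarrow> 'a) set" for S where
  gen_id: "id \<in> gen_by S"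
| gen_mult: "s \<in> S \<Longrightarrow> g \<in> gen_by S \<Longrightarrow> s \<circ> g \<in> gen_by S"
| gen_inv: "s \<in> S \<Longrightarrow> g \<in> gen_by S \<Longrightarrow> Hilbert_Choice.inv s \<circ> g \<in> gen_by S"

definition is_map_group :: "('a \<Rightarrow> 'a) set \<Rightarrow> bool" where
  "is_map_group G \<longleftrightarrow> id \<in> G \<and> (\<forall>g\<in>G. bij g \<and> Hilbert_Choice.inv g \<in> G) \<and> (\<forall>g\<in>G. \<forall>h\<in>G. g \<circ> h \<in> G)"

definition unitary_reflection_group ::
  "('n::finite cvec \<Rightarrow> 'n cvec \<Rightarrow> complex) \<Rightarrow> 'n cmap set \<Rightarrow> bool" where
  "unitary_reflection_group B G \<longleftrightarrow> finite G \<and> is_map_group G \<and>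
     (\<forall>g\<in>G. clinear g \<and> form_preserving B g) \<and>
     G = gen_by {g\<in>G. is_reflection g}"

definition refl :: "('n::finite cvec \<Rightarrow> 'n cvec \<Rightarrow> complex) \<Rightarrow> 'n cvec \<Rightarrow> complex \<Rightarrow> 'n cmap" where
  "refl B a \<zeta> = (\<lambda>v. v - ((1 - \<zeta>) * B v a / B a a) *s a)"

definition root_line :: "('n::finite cvec \<Rightarrow> 'n cvec \<Rightarrow> complex) \<Rightarrow> 'n cmap \<Rightarrow> 'n cvec set" where
  "root_line B r = {v. \<forall>w\<in>fixed_space r. B w v = 0}"

definition parabolic :: "'n::finite cmap set \<Rightarrow> 'n cmap set \<Rightarrow> bool" where
  "parabolic G P \<longleftrightarrow> (\<exists>X. P = {g\<in>G. \<forall>v\<in>X. g v = v})"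

definition maps_grp :: "('a \<Rightarrow> 'a) set \<Rightarrow> ('a \<Rightarrow> 'a) monoid" where
  "maps_grp M = \<lparr>carrier = M, mult = (\<lambda>f g. f \<circ> g), one = id\<rparr>"

text \<open>Coxeter system (W,S): W generated by involutions S and presented by
  the relations (st)^{m(s,t)} = 1, m(s,t) the order of st (m = 0 means infinite,
  no relation).  The presentation is expressed by its universal property, tested
  against all groups whose carrier lives in a countable type (which suffices since
  the presented group is countable when S is).\<close>
definition coxeter_system :: "('a, 'b) monoid_scheme \<Rightarrow> 'a set \<Rightarrow> bool" where
  "coxeter_system W S \<longleftrightarrow> group W \<and> S \<subseteq> carrier W \<and>
     (\<forall>s\<in>S. s \<noteq> \<one>\<^bsub>W\<^esub> \<and> s \<otimes>\<^bsub>W\<^esub> s = \<one>\<^bsub>W\<^esub>) \<and>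
     generate W S = carrier W \<and>
     (\<forall>(H :: nat monoid) \<phi>. group H \<longrightarrow> \<phi> \<in> S \<rightarrow> carrier H \<longrightarrow>
        (\<forall>s\<in>S. \<forall>t\<in>S. (\<phi> s \<otimes>\<^bsub>H\<^esub> \<phi> t) [^]\<^bsub>H\<^esub> group.ord W (s \<otimes>\<^bsub>W\<^esub> t) = \<one>\<^bsub>H\<^esub>) \<longrightarrow>
        (\<exists>\<psi>\<in>hom W H. \<forall>s\<in>S. \<psi> s = \<phi> s))"

definition coxeter_type :: "'n::finite cmap set \<Rightarrow> bool" where
  "coxeter_type P \<longleftrightarrow> (\<exists>S\<subseteq>P. (\<forall>s\<in>S. is_reflection s) \<and> P = gen_by S \<and>
      coxeter_system (maps_grp P) S)"

definition subfield :: "complex set \<Rightarrow> bool" where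
  "subfield F \<longleftrightarrow> 0 \<in> F \<and> 1 \<in> F \<and> (\<forall>x\<in>F. \<forall>y\<in>F. x + y \<in> F \<and> x * y \<in> F \<and> - x \<in> F) \<and>
     (\<forall>x\<in>F. x \<noteq> 0 \<longrightarrow> inverse x \<in> F)"

definition field_embedding :: "complex set \<Rightarrow> (complex \<Rightarrow> complex) \<Rightarrow> bool" where
  "field_embedding F \<sigma> \<longleftrightarrow> \<sigma> 1 = 1 \<and>
     (\<forall>x\<in>F. \<forall>y\<in>F. \<sigma> (x + y) = \<sigma> x + \<sigma> y \<and> \<sigma> (x * y) = \<sigma> x * \<sigma> y)"

definition finite_abelian_ext :: "complex set \<Rightarrow> bool" where
  "finite_abelian_ext F \<longleftrightarrow> subfield F \<and>
     (\<exists>S. finite S \<and> S \<subseteq> F \<and> (\<forall>x\<in>F. \<exists>c. (\<forall>s\<in>S. c s \<in> \<rat>) \<and> x = (\<Sum>s\<in>S. c s * s))) \<and>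
     \<comment> \<open>normal (hence Galois, char 0): every embedding into C maps F onto F\<close>
     (\<forall>\<sigma>. field_embedding F \<sigma> \<longrightarrow> \<sigma> ` F = F) \<and>
     \<comment> \<open>abelian Galois group\<close>
     (\<forall>\<sigma> \<tau>. field_embedding F \<sigma> \<longrightarrow> field_embedding F \<tau> \<longrightarrow>
        (\<forall>x\<in>F. \<sigma> (\<tau> x) = \<tau> (\<sigma> x)))"

definition ring_of_integers :: "complex set \<Rightarrow> complex set" where
  "ring_of_integers F = {x\<in>F. algebraic_int x}"

definition roots_of_unity_in :: "complex set \<Rightarrow> complex set" where
  "roots_of_unity_in A = {z\<in>A. \<exists>n>0. z ^ n = 1}"

definition fspan :: "complex set \<Rightarrow> 'n::finite cvec set \<Rightarrow> 'n cvec set" where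
  "fspan F S = {(\<Sum>x\<in>T. c x *s x) | T c. finite T \<and> T \<subseteq> S \<and> (\<forall>x\<in>T. c x \<in> F)}"

text \<open>U is an F-form of V with Hermitian product: V = C \<otimes>_F U, i.e. U is the
  F-span of a C-basis of V, and the form takes values in F on U.\<close>
definition F_form :: "complex set \<Rightarrow> ('n::finite cvec \<Rightarrow> 'n cvec \<Rightarrow> complex) \<Rightarrow> 'n cvec set \<Rightarrow> bool" where
  "F_form F B U \<longleftrightarrow> (\<exists>b. finite b \<and> vec.independent b \<and> vec.span b = UNIV \<and> U = fspan F b) \<and>
     (\<forall>u\<in>U. \<forall>v\<in>U. B u v \<in> F)"

definition A_root_system ::
  "complex set \<Rightarrow> ('n::finite cvec \<Rightarrow> 'n cvec \<Rightarrow> complex) \<Rightarrow> 'n cvec set \<Rightarrow> 'n cmap set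
    \<Rightarrow> 'n cvec set \<Rightarrow> ('n cvec \<Rightarrow> complex) \<Rightarrow> bool" where
  "A_root_system F B U G \<Sigma> f \<longleftrightarrow>
     (let A = ring_of_integers F; \<mu> = roots_of_unity_in A in
       \<Sigma> \<subseteq> U \<and> fspan F \<Sigma> = U \<and> 0 \<notin> \<Sigma> \<and> (\<forall>a\<in>\<Sigma>. f a \<in> \<mu>) \<and>
       G = gen_by ((\<lambda>a. refl B a (f a)) ` \<Sigma>) \<and>
       (\<forall>a\<in>\<Sigma>. \<forall>c\<in>F. c *s a \<in> \<Sigma> \<longleftrightarrow> c \<in> \<mu>) \<and>
       (\<forall>a\<in>\<Sigma>. \<forall>c\<in>\<mu>. f (c *s a) = f a \<and> f a \<noteq> 1) \<and>
       (\<forall>a\<in>\<Sigma>. \<forall>b\<in>\<Sigma>. (1 - f b) * B a b / B b b \<in> A) \<and>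
       (\<forall>a\<in>\<Sigma>. \<forall>b\<in>\<Sigma>. refl B a (f a) b \<in> \<Sigma> \<and> f (refl B a (f a) b) = f b))"

definition simple_system :: "'n::finite cvec set \<Rightarrow> 'n cvec set \<Rightarrow> bool" where
  "simple_system \<Phi> \<Delta> \<longleftrightarrow> \<Delta> \<subseteq> \<Phi> \<and> finite \<Delta> \<and> independent \<Delta> \<and> span \<Delta> = span \<Phi> \<and>
     (\<forall>a\<in>\<Phi>. \<exists>c. a = (\<Sum>d\<in>\<Delta>. c d *\<^sub>R d) \<and> ((\<forall>d\<in>\<Delta>. 0 \<le> c d) \<or> (\<forall>d\<in>\<Delta>. c d \<le> 0)))"

definition normaliser :: "('a \<Rightarrow> 'a) set \<Rightarrow> ('a \<Rightarrow> 'a) set \<Rightarrow> ('a \<Rightarrow> 'a) set" where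
  "normaliser G P = {g\<in>G. (\<lambda>p. g \<circ> p \<circ> Hilbert_Choice.inv g) ` P = P}"

definition complement_in :: "('a \<Rightarrow> 'a) set \<Rightarrow> ('a \<Rightarrow> 'a) set \<Rightarrow> ('a \<Rightarrow> 'a) set \<Rightarrow> bool" where
  "complement_in N P H \<longleftrightarrow> H \<subseteq> N \<and> is_map_group H \<and>
     N = {p \<circ> k | p k. p \<in> P \<and> k \<in> H} \<and> P \<inter> H = {id}"

end

theory Submission
  imports Defs
begin

text \<open>
  An element \<open>g\<close> of the normaliser conjugates each reflection \<open>r\<^sub>a\<close> of \<open>P\<close> to the reflection
  \<open>r\<^bsub>g a\<^esub>\<close> of \<open>P\<close>, so \<open>g a = \<plusminus>\<gamma>\<^sup>i b\<close> for some \<open>b \<in> \<Phi>\<close>. Because the inner products on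
  \<open>\<Phi>\<close> are real and \<open>\<gamma>\<close> has odd order, the induced map \<open>a \<mapsto> b\<close> preserves the form, so it
  carries \<open>\<Delta>\<close> to another simple system; the Weyl group \<open>P\<close> acts transitively on simple
  systems, so some \<open>w \<in> P\<close> brings it back and \<open>w g\<close> stabilises \<open>\<Delta>\<close> up to powers of \<open>\<gamma>\<close>.
  An element of \<open>P\<close> stabilising \<open>\<Delta>\<close> up to such powers stabilises \<open>\<Delta>\<close> itself (a real power
  of \<open>\<gamma>\<close> is 1), hence is trivial, since the Weyl group acts simply transitively. Finally the
  stabiliser normalises \<open>P\<close>, because it preserves the orthogonal complement of \<open>\<Phi>\<close> while
  \<open>P\<close> is the fixer of a subset of that complement.
\<close>

section \<open>Hermitian forms and reflections\<close>

lemma scaleR_eq_vector_smult: "(r::real) *\<^sub>R (x::complex^'n) = complex_of_real r *s x"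
  unfolding vec_eq_iff vector_scaleR_component vector_smult_component by (simp add: scaleR_conv_of_real)

lemma clinear_scale: "clinear g \<Longrightarrow> g (c *s x) = c *s g x"
  unfolding clinear_def by (rule vec.linear_scale)
lemma clinear_scaleR: "clinear g \<Longrightarrow> g (r *\<^sub>R x) = r *\<^sub>R g x"
  by (simp add: scaleR_eq_vector_smult clinear_scale)
lemma clinear_0: "clinear g \<Longrightarrow> g 0 = 0"
  unfolding clinear_def by (rule vec.linear_0)
lemma clinear_neg: "clinear g \<Longrightarrow> g (- x) = - g x"
  unfolding clinear_def by (rule vec.linear_neg)
lemma clinear_diff: "clinear g \<Longrightarrow> g (x - y) = g x - g y"
  unfolding clinear_def by (rule vec.linear_diff)
lemma clinear_sum: "clinear g \<Longrightarrow> g (sum f S) = (\<Sum>i\<in>S. g (f i))"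
  unfolding clinear_def by (rule vec.linear_sum)
lemma clinear_comp: "clinear f \<Longrightarrow> clinear g \<Longrightarrow> clinear (f \<circ> g)"
  unfolding clinear_def using Vector_Spaces.linear_compose by blast
lemma clinearI: "(\<And>x y. g (x + y) = g x + g y) \<Longrightarrow> (\<And>c x. g (c *s x) = c *s g x) \<Longrightarrow> clinear g"
  unfolding clinear_def by (simp add: Vector_Spaces.linear_iff vec.vector_space_axioms)
lemma clinear_id: "clinear id"
  by (rule clinearI) auto

locale hermitian_form =
  fixes B :: "complex ^ 'n::finite \<Rightarrow> complex ^ 'n \<Rightarrow> complex"
  assumes herm_form: "herm_form B"
begin

lemma add_left: "B (x + y) z = B x z + B y z"
  using herm_form unfolding herm_form_def by blast
lemma scale_left: "B (c *s x) y = c * B x y"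
  using herm_form unfolding herm_form_def by blast
lemma cnj_swap: "cnj (B x y) = B y x"
  using herm_form unfolding herm_form_def by (metis complex_cnj_cnj)
lemma self_pos: "x \<noteq> 0 \<Longrightarrow> Re (B x x) > 0"
  using herm_form unfolding herm_form_def by blast

lemma add_right: "B x (y + z) = B x y + B x z"
  by (metis add_left cnj_swap complex_cnj_add)
lemma scale_right: "B x (c *s y) = cnj c * B x y"
  by (metis scale_left cnj_swap complex_cnj_mult)
lemma zero_left [simp]: "B 0 y = 0"
  using scale_left[of 0 0 y] by simp
lemma zero_right [simp]: "B y 0 = 0"
  using scale_right[of y 0 0] by simp
lemma minus_left: "B (- x) y = - B x y"
  using scale_left[of "-1" x y] by simp
lemma minus_right: "B x (- y) = - B x y"
  using scale_right[of x "-1" y] by simp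
lemma diff_left: "B (x - y) z = B x z - B y z"
  using add_left[of x "-y" z] minus_left by simp
lemma diff_right: "B x (y - z) = B x y - B x z"
  using add_right[of x y "-z"] minus_right by simp
lemma sum_left: "B (sum f S) y = (\<Sum>i\<in>S. B (f i) y)"
  by (induction S rule: infinite_finite_induct) (auto simp: add_left)
lemma sum_right: "B y (sum f S) = (\<Sum>i\<in>S. B y (f i))"
  by (induction S rule: infinite_finite_induct) (auto simp: add_right)
lemma scaleR_left: "B (r *\<^sub>R x) y = of_real r * B x y"
  by (simp add: scaleR_eq_vector_smult scale_left)
lemma scaleR_right: "B x (r *\<^sub>R y) = of_real r * B x y"
  by (simp add: scaleR_eq_vector_smult scale_right)

lemma self_cnj: "cnj (B x x) = B x x"
  by (rule cnj_swap)
lemma self_nonzero: "x \<noteq> 0 \<Longrightarrow> B x x \<noteq> 0"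
  using self_pos by fastforce
lemma self_eq_0_iff: "B x x = 0 \<longleftrightarrow> x = 0"
  using self_nonzero by auto

lemma sum_scaleR_sum_scaleR:
  "B (\<Sum>i\<in>I. c i *\<^sub>R x i) (\<Sum>j\<in>J. e j *\<^sub>R y j) = (\<Sum>i\<in>I. \<Sum>j\<in>J. of_real (c i * e j) * B (x i) (y j))"
  by (simp only: sum_left scaleR_left) (simp add: sum_right scaleR_right sum_distrib_left mult_ac)

abbreviation R where "R a \<equiv> refl B a (-1)"

lemma R_apply: "R a v = v - (2 * B v a / B a a) *s a"
  by (simp add: refl_def)

lemma clinear_refl: "clinear (refl B a z)"
  by (rule clinearI)
    (auto simp: refl_def add_left scale_left vec_eq_iff algebra_simps add_divide_distrib diff_divide_distrib)

lemma R_root: "a \<noteq> 0 \<Longrightarrow> R a a = - a"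
  using self_nonzero[of a] by (simp add: R_apply vec_eq_iff)

lemma R_R: "a \<noteq> 0 \<Longrightarrow> R a (R a v) = v"
proof -
  assume a: "a \<noteq> 0"
  have "R a (R a v) = R a v - (2 * B v a / B a a) *s R a a"
    using clinear_refl[of a "-1"] by (simp add: R_apply[of a v] clinear_diff clinear_scale)
  also have "\<dots> = v" using a by (simp add: R_root R_apply vec_eq_iff)
  finally show ?thesis .
qed

lemma R_o_R: "a \<noteq> 0 \<Longrightarrow> R a \<circ> R a = id"
  using R_R by auto

lemma inv_R: "a \<noteq> 0 \<Longrightarrow> Hilbert_Choice.inv (R a) = R a"
  using R_o_R inv_unique_comp by blast

lemma R_uminus: "R (- a) = R a"
  by (rule ext) (simp add: R_apply minus_left minus_right vec_eq_iff)

lemma R_preserves_form: "a \<noteq> 0 \<Longrightarrow> B (R a u) (R a v) = B u v"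
proof -
  assume a: "a \<noteq> 0"
  have "B (R a u) (R a v) = B u v - cnj (2 * B v a / B a a) * B u a - (2 * B u a / B a a) * B a v
        + (2 * B u a / B a a) * cnj (2 * B v a / B a a) * B a a"
    by (simp add: R_apply diff_left diff_right scale_left scale_right algebra_simps)
  also have "cnj (2 * B v a / B a a) = 2 * B a v / B a a"
    by (simp add: self_cnj cnj_swap)
  finally show ?thesis using self_nonzero[OF a] by (simp add: field_simps)
qed

lemma R_conjugate:
  assumes "clinear u" and "\<forall>x y. B (u x) (u y) = B x y"
  shows "R (u d) (u x) = u (R d x)"
  using assms by (simp add: R_apply clinear_diff clinear_scale)

lemma R_eq_imp_parallel:
  assumes "a \<noteq> 0" "R a = R b"
  shows "a = (B a b / B b b) *s b"
proof -
  have "R b a = - a" using R_root[OF assms(1)] assms(2) by simp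
  then have "2 *s a = 2 *s ((B a b / B b b) *s b)"
    by (simp add: R_apply vec_eq_iff algebra_simps)
  then show ?thesis by (metis vec.scale_cancel_left zero_neq_numeral)
qed

lemma refl_refl: "a \<noteq> 0 \<Longrightarrow> refl B a z (refl B a w v) = refl B a (z * w) v"
proof -
  assume a: "a \<noteq> 0"
  have "B (refl B a w v) a = w * B v a"
    using self_nonzero[OF a] by (simp add: refl_def diff_left scale_left field_simps)
  then show ?thesis using self_nonzero[OF a] by (simp add: refl_def vec_eq_iff field_simps)
qed

lemma refl_1: "refl B a 1 = id"
  by (rule ext) (simp add: refl_def)

lemma R_funpow_2: "a \<noteq> 0 \<Longrightarrow> R a ^^ 2 = id"
  using R_o_R by (simp add: numeral_2_eq_2)

context
  fixes g assumes g: "clinear g" "bij g" "\<forall>x y. B (g x) (g y) = B x y"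
begin

lemma conj_R: "g \<circ> R a \<circ> Hilbert_Choice.inv g = R (g a)"
proof
  fix v
  have "g (R a (Hilbert_Choice.inv g v)) = R (g a) (g (Hilbert_Choice.inv g v))"
    using R_conjugate[OF g(1,3)] by simp
  then show "(g \<circ> R a \<circ> Hilbert_Choice.inv g) v = R (g a) v"
    using surj_f_inv_f[OF bij_is_surj[OF g(2)]] by simp
qed

lemma fixed_space_R_image: "fixed_space (R (g a)) = g ` fixed_space (R a)"
proof
  have key: "R (g a) (g w) = g (R a w)" for w using R_conjugate[OF g(1,3)] by simp
  show "fixed_space (R (g a)) \<subseteq> g ` fixed_space (R a)"
  proof
    fix v assume v: "v \<in> fixed_space (R (g a))"
    define w where "w = Hilbert_Choice.inv g v"
    have vw: "v = g w" unfolding w_def using surj_f_inv_f[OF bij_is_surj[OF g(2)]] by simp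
    have "g (R a w) = g w" using v vw key[of w] by (simp add: fixed_space_def)
    then have "R a w = w" using bij_is_inj[OF g(2)] by (simp add: inj_eq)
    then show "v \<in> g ` fixed_space (R a)" using vw by (simp add: fixed_space_def)
  qed
  show "g ` fixed_space (R a) \<subseteq> fixed_space (R (g a))"
    using key by (auto simp: fixed_space_def)
qed

lemma is_reflection_R_image:
  assumes a: "a \<noteq> 0" and refl: "is_reflection (R a)"
  shows "is_reflection (R (g a))"
proof -
  have "g a \<noteq> 0"
    using a bij_is_inj[OF g(2)] clinear_0[OF g(1)] by (metis inj_eq)
  moreover have "vec.dim (g ` fixed_space (R a)) = vec.dim (fixed_space (R a))"
    using g(1) bij_is_inj[OF g(2)] unfolding clinear_def
    by (rule vec.dim_image_eq[OF _ inj_on_subset[OF _ subset_UNIV]])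
  ultimately show ?thesis
    using refl R_funpow_2 clinear_refl fixed_space_R_image
    unfolding is_reflection_def by (intro conjI exI[of _ 2]) auto
qed

end

lemma finite_roots_if_finite_reflections:
  assumes "finite (R ` \<Phi>)" "0 \<notin> \<Phi>" "\<forall>a\<in>\<Phi>. \<forall>b\<in>\<Phi>. B a b \<in> \<real>"
    and lines: "\<forall>a\<in>\<Phi>. {x\<in>\<Phi>. \<exists>t::real. x = complex_of_real t *s a} = {a, - a}"
  shows "finite \<Phi>"
proof -
  have fibre: "{a\<in>\<Phi>. R a = R a0} \<subseteq> {a0, - a0}" if a0: "a0 \<in> \<Phi>" for a0
  proof
    fix a assume a: "a \<in> {a\<in>\<Phi>. R a = R a0}"
    then have "a = (B a a0 / B a0 a0) *s a0" using R_eq_imp_parallel[of a a0] assms(2) by auto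
    moreover have "B a a0 / B a0 a0 \<in> \<real>" using assms(3) a a0 by simp
    ultimately have "a \<in> {x\<in>\<Phi>. \<exists>t::real. x = complex_of_real t *s a0}"
      using a by (auto elim!: Reals_cases)
    then show "a \<in> {a0, - a0}" using lines a0 by blast
  qed
  have "finite (\<Union>r\<in>R ` \<Phi>. {a\<in>\<Phi>. R a = r})"
  proof (rule finite_UN_I)
    show "finite (R ` \<Phi>)" by (rule assms(1))
    show "finite {a\<in>\<Phi>. R a = r}" if "r \<in> R ` \<Phi>" for r
      using that fibre finite_subset by blast
  qed
  moreover have "\<Phi> \<subseteq> (\<Union>r\<in>R ` \<Phi>. {a\<in>\<Phi>. R a = r})" by blast
  ultimately show ?thesis using finite_subset by blast
qed

lemma inv_refl:
  assumes a: "a \<noteq> 0" and z: "z ^ n = 1" "n > 0"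
  shows "Hilbert_Choice.inv (refl B a z) = refl B a (z ^ (n - 1))"
proof (rule inv_unique_comp)
  have zz: "z * z ^ (n - 1) = 1" using z by (cases n) auto
  have zz': "z ^ (n - 1) * z = 1" using zz by (simp only: mult.commute)
  show "refl B a z \<circ> refl B a (z ^ (n - 1)) = id"
    by (rule ext) (simp only: comp_apply refl_refl[OF a] zz refl_1)
  show "refl B a (z ^ (n - 1)) \<circ> refl B a z = id"
    by (rule ext) (simp only: comp_apply refl_refl[OF a] zz' refl_1)
qed

lemma refl_power_mem:
  assumes a: "a \<noteq> 0" and closed: "\<forall>b\<in>S. refl B a z b \<in> S"
  shows "b \<in> S \<Longrightarrow> refl B a (z ^ k) b \<in> S"
proof (induction k arbitrary: b)
  case 0
  then show ?case by (simp add: refl_1)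
next
  case (Suc k)
  have "refl B a (z ^ Suc k) b = refl B a z (refl B a (z ^ k) b)"
    by (simp add: refl_refl[OF a])
  then show ?case using Suc closed by simp
qed

end

section \<open>Real root systems and their Weyl groups\<close>

lemma gen_by_comp: "g \<in> gen_by S \<Longrightarrow> h \<in> gen_by S \<Longrightarrow> g \<circ> h \<in> gen_by S"
  by (induction g rule: gen_by.induct) (auto simp: comp_assoc intro: gen_by.intros)

lemma gen_by_gen: "s \<in> S \<Longrightarrow> s \<in> gen_by S"
  using gen_by.gen_mult[OF _ gen_by.gen_id, of s S] by simp

definition positive_roots :: "'n::finite cvec set \<Rightarrow> 'n cvec set \<Rightarrow> 'n cvec set" where
  "positive_roots \<Phi> \<Delta> = {a\<in>\<Phi>. \<exists>c. a = (\<Sum>d\<in>\<Delta>. c d *\<^sub>R d) \<and> (\<forall>d\<in>\<Delta>. 0 \<le> c d)}"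

lemma sum_scaleR_substitute:
  fixes D D' :: "'a::real_vector set"
  assumes "\<forall>e\<in>D'. e = (\<Sum>x\<in>D. M e x *\<^sub>R x)"
  shows "(\<Sum>e\<in>D'. c e *\<^sub>R e) = (\<Sum>x\<in>D. (\<Sum>e\<in>D'. c e * M e x) *\<^sub>R x)"
proof -
  have "(\<Sum>e\<in>D'. c e *\<^sub>R e) = (\<Sum>e\<in>D'. c e *\<^sub>R (\<Sum>x\<in>D. M e x *\<^sub>R x))"
    using assms by (intro sum.cong) auto
  also have "\<dots> = (\<Sum>x\<in>D. \<Sum>e\<in>D'. (c e * M e x) *\<^sub>R x)"
    by (simp add: scaleR_sum_right sum.swap[of _ D'])
  also have "\<dots> = (\<Sum>x\<in>D. (\<Sum>e\<in>D'. c e * M e x) *\<^sub>R x)"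
    by (simp add: scaleR_sum_left)
  finally show ?thesis .
qed

lemma sum_scaleR_single_support:
  fixes D :: "'a::real_vector set"
  assumes "finite D" "d \<in> D" "\<forall>x\<in>D-{d}. c x = 0"
  shows "(\<Sum>x\<in>D. c x *\<^sub>R x) = c d *\<^sub>R d"
proof -
  have "(\<Sum>x\<in>D. c x *\<^sub>R x) = c d *\<^sub>R d + (\<Sum>x\<in>D-{d}. c x *\<^sub>R x)"
    using sum.remove[OF assms(1,2)] by simp
  then show ?thesis using assms(3) by simp
qed

locale real_root_system = hermitian_form B for B :: "complex ^ 'n::finite \<Rightarrow> complex ^ 'n \<Rightarrow> complex" +
  fixes \<Phi> :: "(complex ^ 'n) set"
  assumes finite_roots: "finite \<Phi>" and zero_not_root: "0 \<notin> \<Phi>"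
    and form_real: "\<forall>a\<in>\<Phi>. \<forall>b\<in>\<Phi>. B a b \<in> \<real>"
    and real_multiples: "\<forall>a\<in>\<Phi>. {x\<in>\<Phi>. \<exists>t::real. x = complex_of_real t *s a} = {a, - a}"
    and R_permutes: "\<forall>a\<in>\<Phi>. R a ` \<Phi> = \<Phi>"
begin

lemma root_nonzero: "a \<in> \<Phi> \<Longrightarrow> a \<noteq> 0"
  using zero_not_root by auto

lemma uminus_root: "a \<in> \<Phi> \<Longrightarrow> - a \<in> \<Phi>"
  using real_multiples by blast

lemma real_multiple_root: "a \<in> \<Phi> \<Longrightarrow> b \<in> \<Phi> \<Longrightarrow> b = t *\<^sub>R a \<Longrightarrow> b = a \<or> b = - a"
  using real_multiples by (auto simp: scaleR_eq_vector_smult)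

lemma R_root_mem: "a \<in> \<Phi> \<Longrightarrow> b \<in> \<Phi> \<Longrightarrow> R a b \<in> \<Phi>"
  using R_permutes by blast

lemma form_eq_of_real: "a \<in> \<Phi> \<Longrightarrow> b \<in> \<Phi> \<Longrightarrow> B a b = of_real (Re (B a b))"
  using form_real by (simp add: complex_is_Real_iff complex_eq_iff)

definition cartan :: "'n cvec \<Rightarrow> 'n cvec \<Rightarrow> real" where
  "cartan x a = 2 * Re (B x a) / Re (B a a)"

lemma R_apply_root: "a \<in> \<Phi> \<Longrightarrow> x \<in> \<Phi> \<Longrightarrow> R a x = x - cartan x a *\<^sub>R a"
  using form_eq_of_real[of x a] form_eq_of_real[of a a]
  by (simp add: R_apply cartan_def scaleR_eq_vector_smult)

lemma finite_positive_roots: "finite (positive_roots \<Phi> D)"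
  using finite_roots by (rule finite_subset[rotated]) (auto simp: positive_roots_def)

lemma positive_roots_subset: "positive_roots \<Phi> D \<subseteq> \<Phi>"
  by (auto simp: positive_roots_def)

context
  fixes \<Delta> assumes simple: "simple_system \<Phi> \<Delta>"
begin

lemma simple_subset: "\<Delta> \<subseteq> \<Phi>" and finite_simple: "finite \<Delta>"
  and independent_simple: "independent \<Delta>"
  and simple_expansion: "a \<in> \<Phi> \<Longrightarrow> \<exists>c. a = (\<Sum>d\<in>\<Delta>. c d *\<^sub>R d) \<and> ((\<forall>d\<in>\<Delta>. 0 \<le> c d) \<or> (\<forall>d\<in>\<Delta>. c d \<le> 0))"
  using simple unfolding simple_system_def by auto

lemma simple_coeffs_eq_0: "(\<Sum>d\<in>\<Delta>. c d *\<^sub>R d) = 0 \<Longrightarrow> d \<in> \<Delta> \<Longrightarrow> c d = 0"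
  using independent_simple dependent_finite[OF finite_simple] by blast

lemma simple_coeffs_unique:
  assumes "(\<Sum>d\<in>\<Delta>. c d *\<^sub>R d) = (\<Sum>d\<in>\<Delta>. c' d *\<^sub>R d)" "d \<in> \<Delta>"
  shows "c d = c' d"
proof -
  have "(\<Sum>d\<in>\<Delta>. (c d - c' d) *\<^sub>R d) = 0"
    using assms(1) by (simp add: scaleR_left_diff_distrib sum_subtractf)
  then show ?thesis using simple_coeffs_eq_0[of "\<lambda>d. c d - c' d"] assms(2) by simp
qed

lemma positive_or_uminus_positive: "a \<in> \<Phi> \<Longrightarrow> a \<in> positive_roots \<Phi> \<Delta> \<or> - a \<in> positive_roots \<Phi> \<Delta>"
proof -
  assume a: "a \<in> \<Phi>"
  obtain c where c: "a = (\<Sum>d\<in>\<Delta>. c d *\<^sub>R d)" "(\<forall>d\<in>\<Delta>. 0 \<le> c d) \<or> (\<forall>d\<in>\<Delta>. c d \<le> 0)"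
    using simple_expansion[OF a] by blast
  show ?thesis
  proof (cases "\<forall>d\<in>\<Delta>. 0 \<le> c d")
    case True
    then show ?thesis using a c by (auto simp: positive_roots_def)
  next
    case False
    then have "\<forall>d\<in>\<Delta>. 0 \<le> - c d" using c by auto
    moreover have "- a = (\<Sum>d\<in>\<Delta>. (- c d) *\<^sub>R d)" using c by (simp add: sum_negf)
    ultimately have "\<exists>c'. - a = (\<Sum>d\<in>\<Delta>. c' d *\<^sub>R d) \<and> (\<forall>d\<in>\<Delta>. 0 \<le> c' d)"
      by (intro exI[of _ "\<lambda>d. - c d"]) simp
    then show ?thesis using uminus_root[OF a] unfolding positive_roots_def by blast
  qed
qed

lemma uminus_positive_not_positive: "a \<in> positive_roots \<Phi> \<Delta> \<Longrightarrow> - a \<notin> positive_roots \<Phi> \<Delta>"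
proof
  assume a: "a \<in> positive_roots \<Phi> \<Delta>" and na: "- a \<in> positive_roots \<Phi> \<Delta>"
  obtain c where c: "a = (\<Sum>d\<in>\<Delta>. c d *\<^sub>R d)" "\<forall>d\<in>\<Delta>. 0 \<le> c d" "a \<in> \<Phi>"
    using a by (auto simp: positive_roots_def)
  obtain c' where c': "- a = (\<Sum>d\<in>\<Delta>. c' d *\<^sub>R d)" "\<forall>d\<in>\<Delta>. 0 \<le> c' d"
    using na by (auto simp: positive_roots_def)
  have "(\<Sum>d\<in>\<Delta>. c d *\<^sub>R d) = (\<Sum>d\<in>\<Delta>. (- c' d) *\<^sub>R d)"
    using c c' by (simp add: sum_negf) (metis add.inverse_inverse)
  then have "\<forall>d\<in>\<Delta>. c d = - c' d" using simple_coeffs_unique[of c "\<lambda>d. - c' d"] by blast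
  then have "\<forall>d\<in>\<Delta>. c d = 0" using c c' by force
  then show False using c root_nonzero by simp
qed

lemma positive_coeff_imp_positive:
  assumes a: "a \<in> \<Phi>" and c: "a = (\<Sum>d\<in>\<Delta>. c d *\<^sub>R d)" and d0: "d0 \<in> \<Delta>" "c d0 > 0"
  shows "a \<in> positive_roots \<Phi> \<Delta>"
proof (rule ccontr)
  assume "a \<notin> positive_roots \<Phi> \<Delta>"
  then obtain c' where c': "- a = (\<Sum>d\<in>\<Delta>. c' d *\<^sub>R d)" "\<forall>d\<in>\<Delta>. 0 \<le> c' d"
    using positive_or_uminus_positive[OF a] by (auto simp: positive_roots_def)
  have "(\<Sum>d\<in>\<Delta>. c d *\<^sub>R d) = (\<Sum>d\<in>\<Delta>. (- c' d) *\<^sub>R d)"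
    using c c' by (simp add: sum_negf) (metis add.inverse_inverse)
  then have "c d0 = - c' d0" using simple_coeffs_unique[of c "\<lambda>d. - c' d"] d0 by blast
  then show False using d0 c' by force
qed

lemma sum_scaleR_indicator: "d \<in> \<Delta> \<Longrightarrow> (\<Sum>x\<in>\<Delta>. (if x = d then t else 0) *\<^sub>R x) = t *\<^sub>R d"
  using finite_simple by (simp add: if_distrib[of "\<lambda>s. s *\<^sub>R _"] sum.delta cong: if_cong)

lemma simple_positive: "d \<in> \<Delta> \<Longrightarrow> d \<in> positive_roots \<Phi> \<Delta>"
  using sum_scaleR_indicator[of d 1] simple_subset unfolding positive_roots_def
  by (intro CollectI conjI exI[of _ "\<lambda>x. if x = d then 1 else 0"]) auto

lemma positive_parallel_simple:
  assumes "d \<in> \<Delta>" "a \<in> positive_roots \<Phi> \<Delta>" "a = t *\<^sub>R d"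
  shows "a = d"
  using real_multiple_root[of d a t] assms simple_subset positive_roots_subset
    uminus_positive_not_positive[OF simple_positive[OF assms(1)]]
  by blast

lemma R_simple_positive:
  assumes d: "d \<in> \<Delta>" and a: "a \<in> positive_roots \<Phi> \<Delta>" and "a \<noteq> d"
  shows "R d a \<in> positive_roots \<Phi> \<Delta>"
proof -
  obtain c where c: "a = (\<Sum>x\<in>\<Delta>. c x *\<^sub>R x)" "\<forall>x\<in>\<Delta>. 0 \<le> c x" and aP: "a \<in> \<Phi>"
    using a by (auto simp: positive_roots_def)
  have dP: "d \<in> \<Phi>" using d simple_subset by auto
  show ?thesis
  proof (cases "\<forall>x\<in>\<Delta>-{d}. c x = 0")
    case True
    have "a = c d *\<^sub>R d" using c(1) sum_scaleR_single_support[OF finite_simple d True] by simp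
    then show ?thesis using positive_parallel_simple[OF d a] \<open>a \<noteq> d\<close> by blast
  next
    case False
    then obtain x0 where x0: "x0 \<in> \<Delta>" "x0 \<noteq> d" "c x0 > 0" using c(2) by force
    define c' where "c' x = c x - (if x = d then cartan a d else 0)" for x
    have "R d a = (\<Sum>x\<in>\<Delta>. c' x *\<^sub>R x)"
      using R_apply_root[OF dP aP] c(1) sum_scaleR_indicator[OF d, of "cartan a d"]
      by (simp add: c'_def scaleR_left_diff_distrib sum_subtractf)
    moreover have "c' x0 > 0" using x0 by (simp add: c'_def)
    ultimately show ?thesis using positive_coeff_imp_positive[OF R_root_mem[OF dP aP]] x0(1) by blast
  qed
qed

end
end

context real_root_system
begin

abbreviation weyl_group where "weyl_group \<equiv> gen_by (R ` \<Phi>)"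

text \<open>The two differences have the same squared length, so one vanishes iff the other does.\<close>
lemma isometric_lincomb_eq_iff:
  assumes iso: "\<forall>a\<in>\<Phi>. \<forall>b\<in>\<Phi>. B (\<psi> a) (\<psi> b) = B a b"
    and "x ` I \<subseteq> \<Phi>" "y ` J \<subseteq> \<Phi>"
  shows "(\<Sum>i\<in>I. c i *\<^sub>R \<psi> (x i)) = (\<Sum>j\<in>J. e j *\<^sub>R \<psi> (y j))
     \<longleftrightarrow> (\<Sum>i\<in>I. c i *\<^sub>R x i) = (\<Sum>j\<in>J. e j *\<^sub>R y j)"
proof -
  have form_eq: "B (\<Sum>i\<in>K. p i *\<^sub>R \<psi> (u i)) (\<Sum>j\<in>L. q j *\<^sub>R \<psi> (v j))
      = B (\<Sum>i\<in>K. p i *\<^sub>R u i) (\<Sum>j\<in>L. q j *\<^sub>R v j)"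
    if "u ` K \<subseteq> \<Phi>" "v ` L \<subseteq> \<Phi>" for K L p q u v
    unfolding sum_scaleR_sum_scaleR using iso that by (intro sum.cong refl) (auto simp: image_subset_iff)
  define v where "v = (\<Sum>i\<in>I. c i *\<^sub>R \<psi> (x i)) - (\<Sum>j\<in>J. e j *\<^sub>R \<psi> (y j))"
  define u where "u = (\<Sum>i\<in>I. c i *\<^sub>R x i) - (\<Sum>j\<in>J. e j *\<^sub>R y j)"
  have "B v v = B u u"
    unfolding u_def v_def diff_left diff_right using assms(2,3) by (simp add: form_eq)
  then have "v = 0 \<longleftrightarrow> u = 0" using self_eq_0_iff by metis
  then show ?thesis unfolding u_def v_def by simp
qed

lemma isometric_root_eq_lincomb_iff:
  assumes iso: "\<forall>a\<in>\<Phi>. \<forall>b\<in>\<Phi>. B (\<psi> a) (\<psi> b) = B a b"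
    and "a \<in> \<Phi>" "y ` J \<subseteq> \<Phi>"
  shows "\<psi> a = (\<Sum>j\<in>J. e j *\<^sub>R \<psi> (y j)) \<longleftrightarrow> a = (\<Sum>j\<in>J. e j *\<^sub>R y j)"
  using isometric_lincomb_eq_iff[OF iso, of id "{a}" y J "\<lambda>_. 1" e] assms by simp

lemma isometric_inj_on:
  assumes iso: "\<forall>a\<in>\<Phi>. \<forall>b\<in>\<Phi>. B (\<psi> a) (\<psi> b) = B a b"
  shows "inj_on \<psi> \<Phi>"
proof
  fix a b assume a: "a \<in> \<Phi>" and b: "b \<in> \<Phi>" and "\<psi> a = \<psi> b"
  then have "\<psi> a = (\<Sum>j\<in>{b}. 1 *\<^sub>R \<psi> (id j))" by simp
  then have "a = (\<Sum>j\<in>{b}. 1 *\<^sub>R id j)"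
    using isometric_root_eq_lincomb_iff[OF iso a, of id "{b}" "\<lambda>_. 1"] b by simp
  then show "a = b" by simp
qed

lemma isometric_image_roots:
  assumes iso: "\<forall>a\<in>\<Phi>. \<forall>b\<in>\<Phi>. B (\<psi> a) (\<psi> b) = B a b" and into: "\<psi> ` \<Phi> \<subseteq> \<Phi>"
  shows "\<psi> ` \<Phi> = \<Phi>"
  using endo_inj_surj[OF finite_roots into isometric_inj_on[OF iso]] .

context
  fixes \<Delta> \<psi>
  assumes simple: "simple_system \<Phi> \<Delta>"
    and iso: "\<forall>a\<in>\<Phi>. \<forall>b\<in>\<Phi>. B (\<psi> a) (\<psi> b) = B a b" and into: "\<psi> ` \<Phi> \<subseteq> \<Phi>"
begin

lemma inj_on_simple: "inj_on \<psi> \<Delta>"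
  using isometric_inj_on[OF iso] simple_subset[OF simple] inj_on_subset by blast

lemma sum_image_simple: "(\<Sum>y\<in>\<psi> ` \<Delta>. u y *\<^sub>R y) = (\<Sum>d\<in>\<Delta>. u (\<psi> d) *\<^sub>R \<psi> d)"
  using inj_on_simple by (simp add: sum.reindex)

lemma sum_simple_image: "(\<Sum>d\<in>\<Delta>. c d *\<^sub>R \<psi> d) = (\<Sum>y\<in>\<psi> ` \<Delta>. c (inv_into \<Delta> \<psi> y) *\<^sub>R y)"
  using inj_on_simple by (simp add: sum.reindex)

lemma isometric_apply_lincomb: "a \<in> \<Phi> \<Longrightarrow> a = (\<Sum>d\<in>\<Delta>. c d *\<^sub>R d) \<Longrightarrow> \<psi> a = (\<Sum>d\<in>\<Delta>. c d *\<^sub>R \<psi> d)"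
  using isometric_root_eq_lincomb_iff[OF iso, of a id \<Delta> c] simple_subset[OF simple] by simp

lemma isometric_image_expansion:
  assumes "a \<in> \<Phi>" "a = (\<Sum>d\<in>\<Delta>. c d *\<^sub>R d)"
  shows "\<psi> a = (\<Sum>y\<in>\<psi> ` \<Delta>. c (inv_into \<Delta> \<psi> y) *\<^sub>R y)"
    and "(\<forall>y\<in>\<psi> ` \<Delta>. P (c (inv_into \<Delta> \<psi> y))) \<longleftrightarrow> (\<forall>d\<in>\<Delta>. P (c d))"
  using isometric_apply_lincomb[OF assms] sum_simple_image inj_on_simple by (auto simp: inv_into_f_f)

lemma independent_isometric_image: "independent (\<psi> ` \<Delta>)"
proof
  assume "dependent (\<psi> ` \<Delta>)"
  then obtain u where u: "\<exists>v\<in>\<psi> ` \<Delta>. u v \<noteq> 0" "(\<Sum>v\<in>\<psi> ` \<Delta>. u v *\<^sub>R v) = 0"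
    using dependent_finite[OF finite_imageI[OF finite_simple[OF simple]]] by blast
  have "(\<Sum>d\<in>\<Delta>. u (\<psi> d) *\<^sub>R \<psi> (id d)) = (\<Sum>j\<in>{}. u j *\<^sub>R \<psi> (id j))"
    using u(2) sum_image_simple by simp
  then have "(\<Sum>d\<in>\<Delta>. u (\<psi> d) *\<^sub>R id d) = (\<Sum>j\<in>{}. u j *\<^sub>R id j)"
    using isometric_lincomb_eq_iff[OF iso, of id \<Delta> id "{}" "\<lambda>d. u (\<psi> d)" u]
      simple_subset[OF simple] by simp
  then have "\<forall>d\<in>\<Delta>. u (\<psi> d) = 0" using simple_coeffs_eq_0[OF simple, of "\<lambda>d. u (\<psi> d)"] by simp
  then show False using u(1) by auto
qed

lemma simple_system_isometric_image: "simple_system \<Phi> (\<psi> ` \<Delta>)"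
proof -
  have onto: "\<psi> ` \<Phi> = \<Phi>" by (rule isometric_image_roots[OF iso into])
  have sub: "\<psi> ` \<Delta> \<subseteq> \<Phi>" using into simple_subset[OF simple] by auto
  have fin: "finite (\<psi> ` \<Delta>)" using finite_simple[OF simple] by simp
  have rep: "\<exists>c. b = (\<Sum>d\<in>\<psi> ` \<Delta>. c d *\<^sub>R d) \<and> ((\<forall>d\<in>\<psi> ` \<Delta>. 0 \<le> c d) \<or> (\<forall>d\<in>\<psi> ` \<Delta>. c d \<le> 0))"
    if "b \<in> \<Phi>" for b
  proof -
    obtain a where a: "a \<in> \<Phi>" "b = \<psi> a" using \<open>b \<in> \<Phi>\<close> onto by auto
    obtain c where c: "a = (\<Sum>d\<in>\<Delta>. c d *\<^sub>R d)" "(\<forall>d\<in>\<Delta>. 0 \<le> c d) \<or> (\<forall>d\<in>\<Delta>. c d \<le> 0)"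
      using simple_expansion[OF simple a(1)] by blast
    have "b = (\<Sum>y\<in>\<psi> ` \<Delta>. c (inv_into \<Delta> \<psi> y) *\<^sub>R y)"
      using isometric_image_expansion(1)[OF a(1) c(1)] a(2) by simp
    moreover have "(\<forall>y\<in>\<psi> ` \<Delta>. 0 \<le> c (inv_into \<Delta> \<psi> y)) \<or> (\<forall>y\<in>\<psi> ` \<Delta>. c (inv_into \<Delta> \<psi> y) \<le> 0)"
      using c(2) isometric_image_expansion(2)[OF a(1) c(1), of "\<lambda>t. 0 \<le> t"]
        isometric_image_expansion(2)[OF a(1) c(1), of "\<lambda>t. t \<le> 0"] by blast
    ultimately show ?thesis by (intro exI[of _ "\<lambda>y. c (inv_into \<Delta> \<psi> y)"]) blast
  qed
  have "\<Phi> \<subseteq> span (\<psi> ` \<Delta>)"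
  proof
    fix b assume "b \<in> \<Phi>"
    then obtain c where "b = (\<Sum>d\<in>\<psi> ` \<Delta>. c d *\<^sub>R d)" using rep by blast
    then show "b \<in> span (\<psi> ` \<Delta>)" by (simp add: span_sum span_scale span_base)
  qed
  then have "span (\<psi> ` \<Delta>) = span \<Phi>"
    using sub span_mono span_span by (metis subset_antisym)
  then show ?thesis unfolding simple_system_def
    using sub fin independent_isometric_image rep by blast
qed

lemma positive_roots_isometric_image: "positive_roots \<Phi> (\<psi> ` \<Delta>) = \<psi> ` positive_roots \<Phi> \<Delta>"
proof
  show "\<psi> ` positive_roots \<Phi> \<Delta> \<subseteq> positive_roots \<Phi> (\<psi> ` \<Delta>)"
  proof
    fix b assume "b \<in> \<psi> ` positive_roots \<Phi> \<Delta>"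
    then obtain a c where a: "a \<in> \<Phi>" "b = \<psi> a" "a = (\<Sum>d\<in>\<Delta>. c d *\<^sub>R d)" "\<forall>d\<in>\<Delta>. 0 \<le> c d"
      by (auto simp: positive_roots_def)
    show "b \<in> positive_roots \<Phi> (\<psi> ` \<Delta>)"
      using isometric_image_expansion[OF a(1) a(3)] a into unfolding positive_roots_def
      by (intro CollectI conjI exI[of _ "\<lambda>y. c (inv_into \<Delta> \<psi> y)"]) auto
  qed
  show "positive_roots \<Phi> (\<psi> ` \<Delta>) \<subseteq> \<psi> ` positive_roots \<Phi> \<Delta>"
  proof
    fix b assume "b \<in> positive_roots \<Phi> (\<psi> ` \<Delta>)"
    then obtain e where e: "b \<in> \<Phi>" "b = (\<Sum>y\<in>\<psi> ` \<Delta>. e y *\<^sub>R y)" "\<forall>y\<in>\<psi> ` \<Delta>. 0 \<le> e y"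
      by (auto simp: positive_roots_def)
    obtain a where a: "a \<in> \<Phi>" "b = \<psi> a" using e(1) isometric_image_roots[OF iso into] by auto
    have "\<psi> a = (\<Sum>d\<in>\<Delta>. e (\<psi> d) *\<^sub>R \<psi> (id d))" using e(2) a sum_image_simple by simp
    then have "a = (\<Sum>d\<in>\<Delta>. e (\<psi> d) *\<^sub>R id d)"
      using isometric_root_eq_lincomb_iff[OF iso a(1), of id \<Delta> "\<lambda>d. e (\<psi> d)"]
        simple_subset[OF simple] by simp
    then have "a \<in> positive_roots \<Phi> \<Delta>" using a(1) e(3) unfolding positive_roots_def by auto
    then show "b \<in> \<psi> ` positive_roots \<Phi> \<Delta>" using a by auto
  qed
qed

end
end

context real_root_system
begin

lemma obtain_positive_coeffs:
  assumes "D' \<subseteq> positive_roots \<Phi> D"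
  obtains M where "\<forall>e\<in>D'. e = (\<Sum>x\<in>D. M e x *\<^sub>R x) \<and> (\<forall>x\<in>D. 0 \<le> M e x)"
proof -
  have "\<forall>e\<in>D'. \<exists>m. e = (\<Sum>x\<in>D. m x *\<^sub>R x) \<and> (\<forall>x\<in>D. 0 \<le> m x)"
    using assms by (auto simp: positive_roots_def)
  then show ?thesis using that by metis
qed

lemma positive_roots_mono:
  assumes "D' \<subseteq> positive_roots \<Phi> D"
  shows "positive_roots \<Phi> D' \<subseteq> positive_roots \<Phi> D"
proof
  fix a assume "a \<in> positive_roots \<Phi> D'"
  then obtain c where c: "a = (\<Sum>e\<in>D'. c e *\<^sub>R e)" "\<forall>e\<in>D'. 0 \<le> c e" "a \<in> \<Phi>"
    by (auto simp: positive_roots_def)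
  obtain M where M: "\<forall>e\<in>D'. e = (\<Sum>x\<in>D. M e x *\<^sub>R x) \<and> (\<forall>x\<in>D. 0 \<le> M e x)"
    using obtain_positive_coeffs[OF assms] by blast
  have "a = (\<Sum>x\<in>D. (\<Sum>e\<in>D'. c e * M e x) *\<^sub>R x)"
    using c(1) sum_scaleR_substitute[where D=D and D'=D' and M=M and c=c] M by simp
  moreover have "\<forall>x\<in>D. 0 \<le> (\<Sum>e\<in>D'. c e * M e x)"
    using c(2) M by (auto intro!: sum_nonneg)
  ultimately show "a \<in> positive_roots \<Phi> D" using c(3) unfolding positive_roots_def
    by (intro CollectI conjI exI[of _ "\<lambda>x. \<Sum>e\<in>D'. c e * M e x"]) auto
qed

lemma positive_roots_eq_if_subset:
  assumes "simple_system \<Phi> D" "simple_system \<Phi> D'"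
    and "positive_roots \<Phi> D' \<subseteq> positive_roots \<Phi> D"
  shows "positive_roots \<Phi> D' = positive_roots \<Phi> D"
  using assms positive_roots_subset positive_or_uminus_positive[OF assms(2)]
    uminus_positive_not_positive[OF assms(1)]
  by blast

lemma simple_subset_if_positive_roots_eq:
  assumes simple: "simple_system \<Phi> D" and simple': "simple_system \<Phi> D'"
    and eq: "positive_roots \<Phi> D = positive_roots \<Phi> D'"
  shows "D \<subseteq> D'"
proof
  fix d assume d: "d \<in> D"
  have "d \<in> positive_roots \<Phi> D'" using simple_positive[OF simple d] eq by simp
  then obtain c where c: "d = (\<Sum>e\<in>D'. c e *\<^sub>R e)" "\<forall>e\<in>D'. 0 \<le> c e"
    by (auto simp: positive_roots_def)
  have D'_pos: "D' \<subseteq> positive_roots \<Phi> D" using simple_positive[OF simple'] eq by blast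
  obtain M where M: "\<forall>e\<in>D'. e = (\<Sum>x\<in>D. M e x *\<^sub>R x) \<and> (\<forall>x\<in>D. 0 \<le> M e x)"
    using obtain_positive_coeffs[OF D'_pos] by blast
  have "\<exists>e0\<in>D'. c e0 > 0"
  proof (rule ccontr)
    assume "\<not> ?thesis"
    then have "\<forall>e\<in>D'. c e = 0" using c(2) by (meson order.antisym not_less)
    then have "d = 0" using c(1) by simp
    then show False using d simple_subset[OF simple] root_nonzero by blast
  qed
  then obtain e0 where e0: "e0 \<in> D'" "c e0 > 0" by blast
  have "\<forall>x\<in>D-{d}. M e0 x = 0"
  proof
    fix x assume x: "x \<in> D - {d}"
    have coeffs: "(\<Sum>x\<in>D. (\<Sum>e\<in>D'. c e * M e x) *\<^sub>R x) = (\<Sum>x\<in>D. (if x = d then 1 else 0) *\<^sub>R x)"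
      using c(1) sum_scaleR_substitute[where D=D and D'=D' and M=M and c=c] M sum_scaleR_indicator[OF simple d, of 1] by simp
    have "(\<Sum>e\<in>D'. c e * M e x) = 0" using simple_coeffs_unique[OF simple coeffs, of x] x by auto
    then have "c e0 * M e0 x = 0"
      using sum_nonneg_eq_0_iff[OF finite_simple[OF simple'], of "\<lambda>e. c e * M e x"] c(2) M x e0(1)
      by auto
    then show "M e0 x = 0" using e0 by simp
  qed
  then have "e0 = M e0 d *\<^sub>R d"
    using M e0(1) sum_scaleR_single_support[OF finite_simple[OF simple] d, of "M e0"] by simp
  then have "e0 = d" using positive_parallel_simple[OF simple d] D'_pos e0(1) by blast
  then show "d \<in> D'" using e0 by simp
qed

lemma simple_system_eq_if_positive_roots_eq:
  "simple_system \<Phi> D \<Longrightarrow> simple_system \<Phi> D' \<Longrightarrow> positive_roots \<Phi> D = positive_roots \<Phi> D' \<Longrightarrow> D = D'"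
  using simple_subset_if_positive_roots_eq by blast

lemma R_isometric: "a \<in> \<Phi> \<Longrightarrow> \<forall>x\<in>\<Phi>. \<forall>y\<in>\<Phi>. B (R a x) (R a y) = B x y"
  using R_preserves_form root_nonzero by blast

lemma R_image_roots: "a \<in> \<Phi> \<Longrightarrow> R a ` \<Phi> \<subseteq> \<Phi>"
  using R_permutes by blast

lemma positive_roots_R_simple:
  assumes simple: "simple_system \<Phi> D" and d: "d \<in> D"
  shows "positive_roots \<Phi> (R d ` D) = insert (- d) (positive_roots \<Phi> D - {d})"
proof -
  have dP: "d \<in> \<Phi>" using d simple_subset[OF simple] by auto
  have dpos: "d \<in> positive_roots \<Phi> D" using simple_positive[OF simple d] .
  have into: "R d ` (positive_roots \<Phi> D - {d}) \<subseteq> positive_roots \<Phi> D - {d}"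
  proof
    fix y assume "y \<in> R d ` (positive_roots \<Phi> D - {d})"
    then obtain a where a: "a \<in> positive_roots \<Phi> D" "a \<noteq> d" "y = R d a" by auto
    have "a = R d y" using a(3) R_R[OF root_nonzero[OF dP]] by simp
    then have "y \<noteq> d"
      using a(1) R_root[OF root_nonzero[OF dP]] uminus_positive_not_positive[OF simple dpos] by auto
    then show "y \<in> positive_roots \<Phi> D - {d}" using R_simple_positive[OF simple d a(1,2)] a(3) by simp
  qed
  have "inj_on (R d) (positive_roots \<Phi> D - {d})"
    using positive_roots_subset by (blast intro: inj_on_subset[OF isometric_inj_on[OF R_isometric[OF dP]]])
  then have perm: "R d ` (positive_roots \<Phi> D - {d}) = positive_roots \<Phi> D - {d}"
    using endo_inj_surj[OF _ into] finite_positive_roots by blast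
  have "positive_roots \<Phi> (R d ` D) = R d ` positive_roots \<Phi> D"
    by (rule positive_roots_isometric_image[OF simple R_isometric[OF dP] R_image_roots[OF dP]])
  also have "\<dots> = insert (R d d) (R d ` (positive_roots \<Phi> D - {d}))"
    using dpos by blast
  also have "\<dots> = insert (- d) (positive_roots \<Phi> D - {d})"
    unfolding perm R_root[OF root_nonzero[OF dP]] ..
  finally show ?thesis .
qed

theorem simple_systems_conjugate:
  assumes simple: "simple_system \<Phi> D" and simple': "simple_system \<Phi> D'"
  shows "\<exists>w\<in>weyl_group. w ` D' = D"
  using simple'
proof (induction "card (positive_roots \<Phi> D' - positive_roots \<Phi> D)" arbitrary: D' rule: less_induct)
  case less
  show ?case
  proof (cases "D' \<subseteq> positive_roots \<Phi> D")
    case True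
    then have "positive_roots \<Phi> D' = positive_roots \<Phi> D"
      using positive_roots_eq_if_subset[OF simple less.prems] positive_roots_mono by blast
    then have "D' = D" using simple_system_eq_if_positive_roots_eq[OF less.prems simple] by blast
    then show ?thesis using gen_by.gen_id by (intro bexI[of _ id]) auto
  next
    case False
    then obtain d where d: "d \<in> D'" "d \<notin> positive_roots \<Phi> D" by blast
    have dP: "d \<in> \<Phi>" using d simple_subset[OF less.prems] by auto
    have "- d \<in> positive_roots \<Phi> D" using positive_or_uminus_positive[OF simple dP] d by blast
    then have "positive_roots \<Phi> (R d ` D') - positive_roots \<Phi> D
        = (positive_roots \<Phi> D' - positive_roots \<Phi> D) - {d}"
      unfolding positive_roots_R_simple[OF less.prems d(1)] by auto
    moreover have "d \<in> positive_roots \<Phi> D' - positive_roots \<Phi> D"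
      using simple_positive[OF less.prems d(1)] d by blast
    ultimately have "card (positive_roots \<Phi> (R d ` D') - positive_roots \<Phi> D)
        < card (positive_roots \<Phi> D' - positive_roots \<Phi> D)"
      using finite_positive_roots by (metis card_Diff1_less finite_Diff)
    moreover have "simple_system \<Phi> (R d ` D')"
      by (rule simple_system_isometric_image[OF less.prems R_isometric[OF dP] R_image_roots[OF dP]])
    ultimately obtain w where w: "w \<in> weyl_group" "w ` R d ` D' = D" using less.hyps by blast
    have "w \<circ> R d \<in> weyl_group"
      using gen_by_comp[OF w(1) gen_by_gen] dP by blast
    moreover have "(w \<circ> R d) ` D' = D" using w(2) by (simp add: image_comp)
    ultimately show ?thesis by blast
  qed
qed

end

definition simple_coeffs :: "'n::finite cvec set \<Rightarrow> 'n cvec \<Rightarrow> 'n cvec \<Rightarrow> real" where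
  "simple_coeffs D a = (SOME c. a = (\<Sum>d\<in>D. c d *\<^sub>R d))"

definition height :: "'n::finite cvec set \<Rightarrow> 'n cvec \<Rightarrow> real" where
  "height D a = (\<Sum>d\<in>D. simple_coeffs D a d)"

context real_root_system
begin

definition word :: "'n cvec list \<Rightarrow> 'n cmap" where
  "word ds = foldr (\<lambda>d f. R d \<circ> f) ds id"

lemma word_Nil [simp]: "word [] = id"
  by (simp add: word_def)

lemma word_Cons [simp]: "word (d # ds) = R d \<circ> word ds"
  by (simp add: word_def)

lemma word_append: "word (xs @ ys) = word xs \<circ> word ys"
  by (induction xs) (auto simp: comp_assoc)

lemma clinear_word: "clinear (word ds)"
  by (induction ds) (simp_all only: word_Nil word_Cons clinear_id clinear_comp[OF clinear_refl])

lemma word_preserves_form: "set ds \<subseteq> \<Phi> \<Longrightarrow> B (word ds x) (word ds y) = B x y"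
  by (induction ds arbitrary: x y) (auto simp: R_preserves_form root_nonzero)

lemma word_word_rev: "set ds \<subseteq> \<Phi> \<Longrightarrow> word ds (word (rev ds) x) = x"
  by (induction ds arbitrary: x) (auto simp: word_append R_R root_nonzero)

lemma R_word: "set ds \<subseteq> \<Phi> \<Longrightarrow> R (word ds d) = word (ds @ [d] @ rev ds)"
proof
  fix v
  assume ds: "set ds \<subseteq> \<Phi>"
  have "R (word ds d) v = R (word ds d) (word ds (word (rev ds) v))" using word_word_rev[OF ds] by simp
  also have "\<dots> = word ds (R d (word (rev ds) v))"
    using R_conjugate[OF clinear_word] word_preserves_form[OF ds] by blast
  finally show "R (word ds d) v = word (ds @ [d] @ rev ds) v" by (simp add: word_append)
qed

context
  fixes D assumes simple: "simple_system \<Phi> D"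
begin

text \<open>If the first letter \<open>e\<close> equals \<open>word rest d\<close>, then \<open>R e \<circ> word rest = word rest \<circ> R d\<close>,
  which cancels the appended \<open>d\<close>.\<close>
lemma word_snoc_shorten:
  "set ds \<subseteq> D \<Longrightarrow> d \<in> D \<Longrightarrow> word ds d \<notin> positive_roots \<Phi> D \<Longrightarrow>
     \<exists>ds'. set ds' \<subseteq> D \<and> length ds' \<le> length ds \<and> word (ds @ [d]) = word ds'"
proof (induction ds)
  case Nil
  then show ?case using simple_positive[OF simple] by simp
next
  case (Cons e rest)
  have e: "e \<in> D" and rest: "set rest \<subseteq> D" using Cons(2) by auto
  show ?case
  proof (cases "word rest d \<in> positive_roots \<Phi> D")
    case False
    then obtain ds1 where "set ds1 \<subseteq> D" "length ds1 \<le> length rest" "word (rest @ [d]) = word ds1"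
      using Cons.IH[OF rest Cons(3)] by blast
    then show ?thesis using e by (intro exI[of _ "e # ds1"]) auto
  next
    case True
    then have "word rest d = e"
      using R_simple_positive[OF simple e] Cons(4) by fastforce
    have restP: "set rest \<subseteq> \<Phi>" and dP: "d \<in> \<Phi>" using rest Cons(3) simple_subset[OF simple] by auto
    have "word ((e # rest) @ [d]) x = word rest x" for x
    proof -
      have "word ((e # rest) @ [d]) x = R (word rest d) (word rest (R d x))"
        using \<open>word rest d = e\<close> by (simp add: word_append)
      also have "\<dots> = word rest (R d (R d x))"
        using R_conjugate[OF clinear_word] word_preserves_form[OF restP] by blast
      finally show ?thesis using R_R[OF root_nonzero[OF dP]] by simp
    qed
    then show ?thesis using rest by (intro exI[of _ rest]) auto
  qed
qed

lemma word_stabilising_simple: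
  "set ds \<subseteq> D \<Longrightarrow> word ds ` D = D \<Longrightarrow> word ds = id"
proof (induction "length ds" arbitrary: ds rule: less_induct)
  case less
  show ?case
  proof (cases ds rule: rev_cases)
    case Nil
    then show ?thesis by simp
  next
    case (snoc ds0 d)
    have ds0: "set ds0 \<subseteq> D" and d: "d \<in> D" using less(2) snoc by auto
    have dP: "d \<in> \<Phi>" using d simple_subset[OF simple] by auto
    show ?thesis
    proof (cases "word ds0 d \<in> positive_roots \<Phi> D")
      case False
      then obtain ds' where ds': "set ds' \<subseteq> D" "length ds' \<le> length ds0" "word ds = word ds'"
        using word_snoc_shorten[OF ds0 d] snoc by blast
      have "length ds' < length ds" using ds'(2) snoc by simp
      moreover have "word ds' ` D = D" using less(3) ds'(3) by simp
      ultimately show ?thesis using less(1) ds'(1,3) by simp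
    next
      case True
      have "word ds d = word ds0 (R d d)" using snoc by (simp add: word_append)
      also have "\<dots> = - word ds0 d" using R_root[OF root_nonzero[OF dP]] clinear_neg[OF clinear_word] by simp
      finally have eq: "word ds d = - word ds0 d" .
      have "word ds d \<in> D" using less(3) d by blast
      then show ?thesis using simple_positive[OF simple] uminus_positive_not_positive[OF simple True] eq
        by simp
    qed
  qed
qed

lemma height_eq: "a = (\<Sum>d\<in>D. c d *\<^sub>R d) \<Longrightarrow> height D a = (\<Sum>d\<in>D. c d)"
proof -
  assume a: "a = (\<Sum>d\<in>D. c d *\<^sub>R d)"
  then have "a = (\<Sum>d\<in>D. simple_coeffs D a d *\<^sub>R d)" unfolding simple_coeffs_def
    by (rule someI[where P="\<lambda>c. a = (\<Sum>d\<in>D. c d *\<^sub>R d)"])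
  then have "\<forall>d\<in>D. simple_coeffs D a d = c d" using simple_coeffs_unique[OF simple, of "simple_coeffs D a" c] a by auto
  then show ?thesis unfolding height_def by simp
qed

text \<open>A positive non-simple root has positive inner product with some simple root \<open>x\<close>,
  because its squared length is a nonnegative combination of these inner products; then
  \<open>R x\<close> lowers its height.\<close>
lemma positive_root_descent:
  assumes a: "a \<in> positive_roots \<Phi> D" "a \<notin> D"
  obtains x where "x \<in> D" "R x a \<in> positive_roots \<Phi> D" "height D (R x a) < height D a"
proof -
  obtain c where c: "a = (\<Sum>x\<in>D. c x *\<^sub>R x)" "\<forall>x\<in>D. 0 \<le> c x" and aP: "a \<in> \<Phi>"
    using a(1) by (auto simp: positive_roots_def)
  have "Re (B a a) = (\<Sum>x\<in>D. c x * Re (B x a))"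
    by (subst (1) c(1)) (simp add: sum_left scaleR_left Re_sum)
  then have "0 < (\<Sum>x\<in>D. c x * Re (B x a))" using self_pos[OF root_nonzero[OF aP]] by simp
  moreover have "(\<Sum>x\<in>D. c x * Re (B x a)) \<le> 0" if "\<forall>x\<in>D. c x * Re (B x a) \<le> 0"
    using that by (intro sum_nonpos) blast
  ultimately obtain x where x: "x \<in> D" "0 < c x * Re (B x a)"
    by (meson linorder_not_le)
  then have "0 < Re (B x a)" using c(2) by (force simp: zero_less_mult_iff)
  moreover have "Re (B a x) = Re (B x a)" by (metis cnj_swap cnj.sel(1))
  moreover have xP: "x \<in> \<Phi>" using x(1) simple_subset[OF simple] by auto
  ultimately have t: "0 < cartan a x" using self_pos[OF root_nonzero[OF xP]] by (simp add: cartan_def)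
  have "R x a = (\<Sum>y\<in>D. (c y - (if y = x then cartan a x else 0)) *\<^sub>R y)"
    using R_apply_root[OF xP aP] c(1) sum_scaleR_indicator[OF simple x(1), of "cartan a x"]
    by (simp add: scaleR_left_diff_distrib sum_subtractf)
  then have "height D (R x a) = height D a - cartan a x"
    using height_eq c(1) x(1) finite_simple[OF simple] by (simp add: sum_subtractf)
  moreover have "R x a \<in> positive_roots \<Phi> D" using R_simple_positive[OF simple x(1) a(1)] x(1) a(2) by blast
  ultimately show ?thesis using that x(1) t by simp
qed

lemma positive_root_word_image:
  "a \<in> positive_roots \<Phi> D \<Longrightarrow> \<exists>ds d. set ds \<subseteq> D \<and> d \<in> D \<and> a = word ds d"
proof (induction "card {b \<in> positive_roots \<Phi> D. height D b < height D a}" arbitrary: a rule: less_induct)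
  case less
  show ?case
  proof (cases "a \<in> D")
    case True
    then show ?thesis by (intro exI[of _ "[]"] exI[of _ a]) simp
  next
    case False
    then obtain x where x: "x \<in> D" "R x a \<in> positive_roots \<Phi> D" "height D (R x a) < height D a"
      using positive_root_descent less.prems by blast
    have "{b \<in> positive_roots \<Phi> D. height D b < height D (R x a)}
        \<subset> {b \<in> positive_roots \<Phi> D. height D b < height D a}"
      using x(2,3) by auto
    then have "card {b \<in> positive_roots \<Phi> D. height D b < height D (R x a)}
        < card {b \<in> positive_roots \<Phi> D. height D b < height D a}"
      using finite_positive_roots by (simp add: psubset_card_mono)
    then obtain ds d where dsd: "set ds \<subseteq> D" "d \<in> D" "R x a = word ds d"
      using less.hyps x(2) by blast
    have "a = R x (R x a)"
      using R_R[OF root_nonzero] x(1) simple_subset[OF simple] by auto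
    then have "a = word (x # ds) d" using dsd by simp
    then show ?thesis using dsd x(1) by (intro exI[of _ "x # ds"] exI[of _ d]) simp
  qed
qed

lemma R_eq_word: "a \<in> \<Phi> \<Longrightarrow> \<exists>ds. set ds \<subseteq> D \<and> R a = word ds"
proof -
  assume a: "a \<in> \<Phi>"
  obtain a' where a': "a' \<in> positive_roots \<Phi> D" "R a = R a'"
    using positive_or_uminus_positive[OF simple a] R_uminus by metis
  obtain ds d where dsd: "set ds \<subseteq> D" "d \<in> D" "a' = word ds d"
    using positive_root_word_image[OF a'(1)] by blast
  have "R a = word (ds @ [d] @ rev ds)" using a'(2) dsd R_word simple_subset[OF simple] by auto
  then show ?thesis using dsd by (intro exI[of _ "ds @ [d] @ rev ds"]) auto
qed

lemma weyl_group_eq_word: "g \<in> weyl_group \<Longrightarrow> \<exists>ds. set ds \<subseteq> D \<and> g = word ds"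
proof (induction g rule: gen_by.induct)
  case gen_id
  then show ?case by (intro exI[of _ "[]"]) simp
next
  case (gen_mult s g)
  then obtain a ds where "a \<in> \<Phi>" "s = R a" "set ds \<subseteq> D" "g = word ds" by blast
  then show ?case using R_eq_word by (metis Un_subset_iff set_append word_append)
next
  case (gen_inv s g)
  then obtain a ds where "a \<in> \<Phi>" "Hilbert_Choice.inv s = R a" "set ds \<subseteq> D" "g = word ds"
    using inv_R root_nonzero by blast
  then show ?case using R_eq_word by (metis Un_subset_iff set_append word_append)
qed

theorem weyl_group_stabiliser_simple: "p \<in> weyl_group \<Longrightarrow> p ` D = D \<Longrightarrow> p = id"
  using weyl_group_eq_word word_stabilising_simple by blast

end

lemma weyl_group_root_mem: "p \<in> weyl_group \<Longrightarrow> a \<in> \<Phi> \<Longrightarrow> p a \<in> \<Phi>"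
proof (induction p arbitrary: a rule: gen_by.induct)
  case (gen_inv s g)
  then show ?case using R_root_mem inv_R root_nonzero by auto
qed (auto simp: R_root_mem)

lemma weyl_group_fixes_orthogonal: "p \<in> weyl_group \<Longrightarrow> \<forall>a\<in>\<Phi>. B v a = 0 \<Longrightarrow> p v = v"
proof (induction p rule: gen_by.induct)
  case (gen_inv s g)
  then show ?case using inv_R root_nonzero by (auto simp: R_apply)
qed (auto simp: R_apply)

end

section \<open>The normaliser of a parabolic subgroup\<close>

lemma real_root_of_unity_odd:
  fixes c :: complex
  assumes "c \<in> \<real>" "c ^ h = 1" "odd h"
  shows "c = 1"
proof -
  obtain r where r: "c = of_real r" using assms(1) by (auto elim: Reals_cases)
  have rh: "r ^ h = 1" using assms(2) r by (metis of_real_eq_1_iff of_real_power)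
  have "\<bar>r\<bar> ^ h = 1 ^ h" using rh by (metis power_abs abs_1 power_one)
  then have "\<bar>r\<bar> = 1" using power_eq_imp_eq_base[of "\<bar>r\<bar>" h 1] odd_pos[OF assms(3)] by simp
  moreover have "r \<noteq> -1" using rh assms(3) by auto
  ultimately have "r = 1" by arith
  then show ?thesis using r by simp
qed

lemma conjugation_image_eq:
  assumes "bij g"
    and "\<forall>q\<in>P. g \<circ> q \<circ> Hilbert_Choice.inv g \<in> P"
    and "\<forall>q\<in>P. Hilbert_Choice.inv g \<circ> q \<circ> g \<in> P"
  shows "(\<lambda>q. g \<circ> q \<circ> Hilbert_Choice.inv g) ` P = P"
proof
  show "(\<lambda>q. g \<circ> q \<circ> Hilbert_Choice.inv g) ` P \<subseteq> P" using assms(2) by blast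
  show "P \<subseteq> (\<lambda>q. g \<circ> q \<circ> Hilbert_Choice.inv g) ` P"
  proof
    fix q assume "q \<in> P"
    have "q = g \<circ> (Hilbert_Choice.inv g \<circ> q \<circ> g) \<circ> Hilbert_Choice.inv g"
      using bij_is_surj[OF assms(1)] by (simp add: fun_eq_iff surj_f_inv_f)
    moreover have "Hilbert_Choice.inv g \<circ> q \<circ> g \<in> P" using assms(3) \<open>q \<in> P\<close> by blast
    ultimately show "q \<in> (\<lambda>q. g \<circ> q \<circ> Hilbert_Choice.inv g) ` P" by (rule image_eqI)
  qed
qed

lemma normaliser_comp:
  assumes G: "is_map_group G" and g: "g \<in> normaliser G P" and k: "k \<in> normaliser G P"
  shows "g \<circ> k \<in> normaliser G P"
proof -
  have gk: "g \<in> G" "k \<in> G" "bij g" "bij k"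
    using G g k unfolding normaliser_def is_map_group_def by auto
  have "(\<lambda>q. (g \<circ> k) \<circ> q \<circ> Hilbert_Choice.inv (g \<circ> k))
      = (\<lambda>q. g \<circ> q \<circ> Hilbert_Choice.inv g) \<circ> (\<lambda>q. k \<circ> q \<circ> Hilbert_Choice.inv k)"
    using o_inv_distrib[OF gk(3,4)] by (simp add: fun_eq_iff)
  then have "(\<lambda>q. (g \<circ> k) \<circ> q \<circ> Hilbert_Choice.inv (g \<circ> k)) ` P
      = (\<lambda>q. g \<circ> q \<circ> Hilbert_Choice.inv g) ` (\<lambda>q. k \<circ> q \<circ> Hilbert_Choice.inv k) ` P"
    by (simp only: image_comp)
  also have "\<dots> = P" using g k unfolding normaliser_def by simp
  finally have "(\<lambda>q. (g \<circ> k) \<circ> q \<circ> Hilbert_Choice.inv (g \<circ> k)) ` P = P" .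
  then show ?thesis
    using G gk(1,2) unfolding normaliser_def is_map_group_def by simp
qed

locale parabolic_setting = real_root_system B \<Phi> for B :: "complex ^ 'n::finite \<Rightarrow> complex ^ 'n \<Rightarrow> complex" and \<Phi> +
  fixes G P :: "(complex ^ 'n \<Rightarrow> complex ^ 'n) set" and X \<Sigma> \<Delta> :: "(complex ^ 'n) set"
    and \<gamma> :: complex and h :: nat
  assumes G: "unitary_reflection_group B G"
    and P_fixer: "P = {g\<in>G. \<forall>v\<in>X. g v = v}"
    and P_weyl_group: "P = weyl_group"
    and P_reflections: "{g\<in>P. is_reflection g} = R ` \<Phi>"
    and simple: "simple_system \<Phi> \<Delta>"
    and h_odd: "odd h" and gamma_pow: "\<gamma> ^ h = 1"
    and G_Sigma: "g \<in> G \<Longrightarrow> a \<in> \<Sigma> \<Longrightarrow> g a \<in> \<Sigma>"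
    and roots_Sigma: "\<Phi> \<subseteq> \<Sigma>"
    and Sigma_multiple: "b \<in> \<Sigma> \<Longrightarrow> l *s b \<in> \<Sigma> \<Longrightarrow> l \<in> {s * \<gamma> ^ i | s i. s \<in> {1, -1} \<and> i < h}"
begin

definition Delta_tilde where "Delta_tilde = {\<gamma> ^ i *s d | i d. i < h \<and> d \<in> \<Delta>}"

definition H where "H = {g\<in>G. g ` Delta_tilde = Delta_tilde}"

lemma id_G: "id \<in> G"
  and bij_G: "g \<in> G \<Longrightarrow> bij g" and inv_G: "g \<in> G \<Longrightarrow> Hilbert_Choice.inv g \<in> G"
  and comp_G: "g \<in> G \<Longrightarrow> g' \<in> G \<Longrightarrow> g \<circ> g' \<in> G"
  and clinear_G: "g \<in> G \<Longrightarrow> clinear g"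
  and G_preserves_form: "g \<in> G \<Longrightarrow> B (g u) (g v) = B u v"
  using G unfolding unitary_reflection_group_def is_map_group_def form_preserving_def by auto

lemma P_subset_G: "P \<subseteq> G"
  using P_fixer by blast

lemma comp_P: "p \<in> P \<Longrightarrow> q \<in> P \<Longrightarrow> p \<circ> q \<in> P"
  using P_fixer comp_G by auto

lemma inv_P: "p \<in> P \<Longrightarrow> Hilbert_Choice.inv p \<in> P"
  using P_fixer inv_G bij_G by (auto simp: bij_is_inj inv_f_eq)

lemma R_P: "a \<in> \<Phi> \<Longrightarrow> R a \<in> P"
  unfolding P_weyl_group by (rule gen_by_gen) blast

lemma h_pos: "h > 0"
  using h_odd by (rule odd_pos)

lemma gamma_power_pow: "(\<gamma> ^ i) ^ h = 1"
  using gamma_pow by (metis power_mult mult.commute power_one)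

lemma gamma_power_mod: "\<gamma> ^ n = \<gamma> ^ (n mod h)"
proof -
  have "\<gamma> ^ n = (\<gamma> ^ h) ^ (n div h) * \<gamma> ^ (n mod h)"
    by (metis div_mult_mod_eq mult.commute power_add power_mult)
  then show ?thesis using gamma_pow by simp
qed

lemma real_gamma_power: "\<gamma> ^ i \<in> \<real> \<Longrightarrow> \<gamma> ^ i = 1"
  using real_root_of_unity_odd[OF _ gamma_power_pow h_odd] by blast

lemma finite_Delta_tilde: "finite Delta_tilde"
proof -
  have "Delta_tilde = (\<lambda>(i, d). \<gamma> ^ i *s d) ` ({..<h} \<times> \<Delta>)" unfolding Delta_tilde_def by auto
  then show ?thesis using finite_simple[OF simple] by simp
qed

lemma simple_subset_Delta_tilde: "\<Delta> \<subseteq> Delta_tilde"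
  unfolding Delta_tilde_def using h_pos by force

lemma conj_R_G: "g \<in> G \<Longrightarrow> g \<circ> R a \<circ> Hilbert_Choice.inv g = R (g a)"
  using conj_R clinear_G bij_G G_preserves_form by blast

text \<open>An element of the normaliser conjugates \<open>R a\<close> to a reflection of \<open>P\<close>, hence to some \<open>R b\<close>;
  so \<open>g a\<close> is a multiple of \<open>b\<close> lying in \<open>\<Sigma>\<close>, and the multiplier is \<open>\<pm>\<gamma>\<^sup>i\<close>.\<close>
lemma normaliser_image_root:
  assumes g: "g \<in> normaliser G P" and a: "a \<in> \<Phi>"
  shows "\<exists>i<h. \<exists>b\<in>\<Phi>. g a = \<gamma> ^ i *s b"
proof -
  have gG: "g \<in> G" and gP: "(\<lambda>p. g \<circ> p \<circ> Hilbert_Choice.inv g) ` P = P"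
    using g unfolding normaliser_def by simp_all
  have "g \<circ> R a \<circ> Hilbert_Choice.inv g \<in> P" using gP R_P[OF a] by blast
  then have "R (g a) \<in> P" unfolding conj_R_G[OF gG] .
  moreover have "is_reflection (R a)" using P_reflections a by blast
  then have "is_reflection (R (g a))"
    using is_reflection_R_image[OF clinear_G[OF gG] bij_G[OF gG] _ root_nonzero[OF a]]
      G_preserves_form[OF gG] by blast
  ultimately have "R (g a) \<in> R ` \<Phi>" unfolding P_reflections[symmetric] by blast
  then obtain b where b: "b \<in> \<Phi>" "R (g a) = R b" by blast
  have "g a \<noteq> 0"
    using root_nonzero[OF a] clinear_0[OF clinear_G[OF gG]] bij_is_inj[OF bij_G[OF gG]] by (metis inj_eq)
  then have ga: "g a = (B (g a) b / B b b) *s b" using R_eq_imp_parallel b(2) by blast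
  have "(B (g a) b / B b b) *s b \<in> \<Sigma>"
    by (subst ga[symmetric]) (use G_Sigma[OF gG] a roots_Sigma in blast)
  then obtain s i where si: "B (g a) b / B b b = s * \<gamma> ^ i" "s \<in> {1, -1}" "i < h"
    using Sigma_multiple b(1) roots_Sigma by blast
  show ?thesis
  proof (cases "s = 1")
    case True
    then have "g a = \<gamma> ^ i *s b" using ga si(1) by simp
    then show ?thesis using si(3) b(1) by blast
  next
    case False
    then have "g a = \<gamma> ^ i *s (- b)" using ga si(1,2) by (simp add: vec_eq_iff)
    then show ?thesis using si(3) uminus_root[OF b(1)] by blast
  qed
qed

text \<open>Writing \<open>g a = \<gamma>\<^bsup>I a\<^esup> \<psi> a\<close>, the map \<open>\<psi>\<close> preserves the form on \<open>\<Phi>\<close>: the ratio of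
  \<open>(a, b)\<close> and \<open>(\<psi> a, \<psi> b)\<close> is a real root of unity of odd order.\<close>
lemma normaliser_root_isometry:
  assumes g: "g \<in> normaliser G P"
  obtains \<psi> I where "\<psi> ` \<Phi> \<subseteq> \<Phi>" "\<forall>a\<in>\<Phi>. \<forall>b\<in>\<Phi>. B (\<psi> a) (\<psi> b) = B a b"
    "\<forall>a\<in>\<Phi>. g a = \<gamma> ^ I a *s \<psi> a"
proof -
  have gG: "g \<in> G" using g unfolding normaliser_def by simp
  obtain I \<psi> where psi: "\<forall>a\<in>\<Phi>. \<psi> a \<in> \<Phi> \<and> g a = \<gamma> ^ I a *s \<psi> a"
    using normaliser_image_root[OF g] by metis
  have "B (\<psi> a) (\<psi> b) = B a b" if a: "a \<in> \<Phi>" and b: "b \<in> \<Phi>" for a b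
  proof -
    define c where "c = \<gamma> ^ I a * cnj (\<gamma> ^ I b)"
    have e: "B a b = c * B (\<psi> a) (\<psi> b)"
      using G_preserves_form[OF gG, of a b] psi a b by (simp add: scale_left scale_right c_def mult_ac)
    have "c ^ h = 1" using gamma_power_pow[of "I a"] gamma_power_pow[of "I b"]
      by (simp add: c_def power_mult_distrib flip: complex_cnj_power)
    show ?thesis
    proof (cases "B (\<psi> a) (\<psi> b) = 0")
      case False
      then have "c = B a b / B (\<psi> a) (\<psi> b)" using e by simp
      then have "c \<in> \<real>" using form_real psi a b by simp
      then show ?thesis using e real_root_of_unity_odd[OF _ \<open>c ^ h = 1\<close> h_odd] by simp
    qed (use e in simp)
  qed
  then show ?thesis using that psi by blast
qed

lemma normaliser_eq_P_H: "g \<in> normaliser G P \<Longrightarrow> \<exists>p\<in>P. \<exists>k\<in>H. g = p \<circ> k"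
proof -
  assume g: "g \<in> normaliser G P"
  then have gG: "g \<in> G" unfolding normaliser_def by simp
  obtain \<psi> I where psi: "\<psi> ` \<Phi> \<subseteq> \<Phi>" "\<forall>a\<in>\<Phi>. \<forall>b\<in>\<Phi>. B (\<psi> a) (\<psi> b) = B a b"
    "\<forall>a\<in>\<Phi>. g a = \<gamma> ^ I a *s \<psi> a"
    using normaliser_root_isometry[OF g] by blast
  obtain w where w: "w \<in> P" "w ` \<psi> ` \<Delta> = \<Delta>"
    using simple_systems_conjugate[OF simple simple_system_isometric_image[OF simple psi(2,1)]]
      P_weyl_group by blast
  have wG: "w \<in> G" using w(1) P_subset_G by blast
  have "(w \<circ> g) ` Delta_tilde \<subseteq> Delta_tilde"
  proof
    fix y assume "y \<in> (w \<circ> g) ` Delta_tilde"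
    then obtain j d where jd: "j < h" "d \<in> \<Delta>" "y = w (g (\<gamma> ^ j *s d))" unfolding Delta_tilde_def by auto
    have "y = (\<gamma> ^ j * \<gamma> ^ I d) *s w (\<psi> d)"
      using jd psi(3) simple_subset[OF simple] clinear_scale[OF clinear_G[OF gG]]
        clinear_scale[OF clinear_G[OF wG]] by auto
    also have "\<gamma> ^ j * \<gamma> ^ I d = \<gamma> ^ ((j + I d) mod h)"
      by (metis power_add gamma_power_mod)
    finally show "y \<in> Delta_tilde"
      unfolding Delta_tilde_def using w(2) jd(2) h_pos by fastforce
  qed
  then have "(w \<circ> g) ` Delta_tilde = Delta_tilde"
    using endo_inj_surj[OF finite_Delta_tilde] bij_is_inj[OF bij_G[OF comp_G[OF wG gG]]]
    by (metis inj_on_subset subset_UNIV)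
  then have "w \<circ> g \<in> H" unfolding H_def using comp_G[OF wG gG] by simp
  moreover have "g = Hilbert_Choice.inv w \<circ> (w \<circ> g)"
    using bij_is_inj[OF bij_G[OF wG]] by (simp add: comp_assoc[symmetric])
  ultimately show ?thesis using inv_P[OF w(1)] by blast
qed

end

context parabolic_setting
begin

lemma fixer_orthogonal_roots: "x \<in> X \<Longrightarrow> a \<in> \<Phi> \<Longrightarrow> B x a = 0"
proof -
  assume x: "x \<in> X" and a: "a \<in> \<Phi>"
  then have "R a x = x" using R_P P_fixer by blast
  then have "(2 * B x a / B a a) *s a = 0" by (simp add: R_apply)
  then show "B x a = 0" using root_nonzero[OF a] self_nonzero[OF root_nonzero[OF a]]
    by (simp add: vec.scale_eq_0_iff)
qed

lemma normaliser_P: "P \<subseteq> normaliser G P"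
proof
  fix p assume p: "p \<in> P"
  then have pG: "p \<in> G" using P_subset_G by blast
  have "(\<lambda>q. p \<circ> q \<circ> Hilbert_Choice.inv p) ` P = P"
    by (rule conjugation_image_eq[OF bij_G[OF pG]]) (simp_all add: comp_P inv_P p)
  then show "p \<in> normaliser G P" using pG unfolding normaliser_def by simp
qed

lemma inv_H: "k \<in> H \<Longrightarrow> Hilbert_Choice.inv k \<in> H"
proof -
  assume "k \<in> H"
  then have kG: "k \<in> G" and kD: "k ` Delta_tilde = Delta_tilde" unfolding H_def by auto
  have "Hilbert_Choice.inv k ` Delta_tilde = Hilbert_Choice.inv k ` k ` Delta_tilde" using kD by simp
  also have "\<dots> = Delta_tilde" by (rule image_inv_f_f[OF bij_is_inj[OF bij_G[OF kG]]])
  finally show ?thesis using inv_G[OF kG] unfolding H_def by simp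
qed

text \<open>\<open>(k\<^sup>-\<^sup>1 v, a) = (v, k a)\<close>, and \<open>k a\<close> is a combination of multiples of simple roots.\<close>
lemma inv_H_orthogonal:
  assumes k: "k \<in> H" and v: "\<forall>a\<in>\<Phi>. B v a = 0" and a: "a \<in> \<Phi>"
  shows "B (Hilbert_Choice.inv k v) a = 0"
proof -
  have kG: "k \<in> G" and kD: "k ` Delta_tilde = Delta_tilde" using k unfolding H_def by auto
  obtain c where c: "a = (\<Sum>d\<in>\<Delta>. c d *\<^sub>R d)" using simple_expansion[OF simple a] by blast
  have kd: "B v (k d) = 0" if "d \<in> \<Delta>" for d
  proof -
    have "k d \<in> Delta_tilde" using kD simple_subset_Delta_tilde that by blast
    then obtain i e where "k d = \<gamma> ^ i *s e" "e \<in> \<Delta>" unfolding Delta_tilde_def by blast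
    then show ?thesis using v simple_subset[OF simple] by (auto simp: scale_right)
  qed
  have "B (Hilbert_Choice.inv k v) a = B v (k a)"
    using G_preserves_form[OF kG, of "Hilbert_Choice.inv k v" a]
      surj_f_inv_f[OF bij_is_surj[OF bij_G[OF kG]]] by simp
  also have "\<dots> = (\<Sum>d\<in>\<Delta>. of_real (c d) * B v (k d))"
    unfolding c clinear_sum[OF clinear_G[OF kG]] clinear_scaleR[OF clinear_G[OF kG]]
    by (simp add: sum_right scaleR_right)
  finally show ?thesis using kd by simp
qed

lemma conj_P_H: "k \<in> H \<Longrightarrow> q \<in> P \<Longrightarrow> k \<circ> q \<circ> Hilbert_Choice.inv k \<in> P"
proof -
  assume k: "k \<in> H" and q: "q \<in> P"
  have kG: "k \<in> G" using k unfolding H_def by auto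
  have "q (Hilbert_Choice.inv k x) = Hilbert_Choice.inv k x" if "x \<in> X" for x
    using weyl_group_fixes_orthogonal q inv_H_orthogonal[OF k] fixer_orthogonal_roots[OF that]
    unfolding P_weyl_group by blast
  then have "\<forall>x\<in>X. (k \<circ> q \<circ> Hilbert_Choice.inv k) x = x"
    using surj_f_inv_f[OF bij_is_surj[OF bij_G[OF kG]]] by simp
  moreover have "k \<circ> q \<circ> Hilbert_Choice.inv k \<in> G"
    using comp_G[OF comp_G[OF kG] inv_G[OF kG]] q P_subset_G by blast
  ultimately show ?thesis using P_fixer by blast
qed

lemma normaliser_H: "H \<subseteq> normaliser G P"
proof
  fix k assume k: "k \<in> H"
  have kG: "k \<in> G" using k unfolding H_def by auto
  have "\<forall>q\<in>P. Hilbert_Choice.inv k \<circ> q \<circ> k \<in> P"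
    using conj_P_H[OF inv_H[OF k]] inv_inv_eq[OF bij_G[OF kG]] by simp
  then have "(\<lambda>q. k \<circ> q \<circ> Hilbert_Choice.inv k) ` P = P"
    using conjugation_image_eq[OF bij_G[OF kG]] conj_P_H[OF k] by blast
  then show "k \<in> normaliser G P" using kG unfolding normaliser_def by simp
qed

lemma P_inter_H: "P \<inter> H = {id}"
proof
  show "{id} \<subseteq> P \<inter> H"
    using id_G P_fixer unfolding H_def by simp
  show "P \<inter> H \<subseteq> {id}"
  proof
    fix p assume "p \<in> P \<inter> H"
    then have p: "p \<in> weyl_group" "p \<in> G" "p ` Delta_tilde = Delta_tilde"
      unfolding H_def P_weyl_group by auto
    have "p d \<in> \<Delta>" if d: "d \<in> \<Delta>" for d
    proof -
      have "p d \<in> Delta_tilde" using p(3) simple_subset_Delta_tilde d by blast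
      then obtain i e where ie: "p d = \<gamma> ^ i *s e" "e \<in> \<Delta>" unfolding Delta_tilde_def by blast
      have dP: "d \<in> \<Phi>" and eP: "e \<in> \<Phi>" using d ie(2) simple_subset[OF simple] by auto
      have "\<gamma> ^ i = B (p d) e / B e e"
        using ie(1) self_nonzero[OF root_nonzero[OF eP]] by (simp add: scale_left)
      then have "\<gamma> ^ i \<in> \<real>" using form_real weyl_group_root_mem[OF p(1) dP] eP by simp
      then show ?thesis using real_gamma_power[of i] ie by simp
    qed
    then have "p ` \<Delta> = \<Delta>"
      using endo_inj_surj[OF finite_simple[OF simple]] bij_is_inj[OF bij_G[OF p(2)]]
      by (metis image_subsetI inj_on_subset subset_UNIV)
    then show "p \<in> {id}" using weyl_group_stabiliser_simple[OF simple p(1)] by simp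
  qed
qed

lemma map_group_H: "is_map_group H"
proof (unfold is_map_group_def, intro conjI ballI)
  show "id \<in> H" using id_G unfolding H_def by simp
  show "bij g" if "g \<in> H" for g using that bij_G unfolding H_def by blast
  show "Hilbert_Choice.inv g \<in> H" if "g \<in> H" for g using that by (rule inv_H)
  show "g \<circ> g' \<in> H" if "g \<in> H" "g' \<in> H" for g g'
  proof -
    have "(g \<circ> g') ` Delta_tilde = g ` g' ` Delta_tilde" by (rule image_comp[symmetric])
    then show ?thesis using that comp_G unfolding H_def by simp
  qed
qed

theorem complement_H: "complement_in (normaliser G P) P H"
  unfolding complement_in_def
proof (intro conjI)
  show "normaliser G P = {p \<circ> k |p k. p \<in> P \<and> k \<in> H}"
  proof
    show "normaliser G P \<subseteq> {p \<circ> k |p k. p \<in> P \<and> k \<in> H}"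
      using normaliser_eq_P_H by blast
    have "is_map_group G" using G unfolding unitary_reflection_group_def by blast
    then show "{p \<circ> k |p k. p \<in> P \<and> k \<in> H} \<subseteq> normaliser G P"
      using normaliser_comp normaliser_P normaliser_H by blast
  qed
qed (use normaliser_H map_group_H P_inter_H in auto)

end

section \<open>\<open>A\<close>-root systems\<close>

context hermitian_form
begin

lemma A_root_system_image:
  assumes root_sys: "A_root_system F B U G \<Sigma> f" and "g \<in> G" "a \<in> \<Sigma>"
  shows "g a \<in> \<Sigma>"
proof -
  have zero: "0 \<notin> \<Sigma>" and G: "G = gen_by ((\<lambda>c. refl B c (f c)) ` \<Sigma>)"
    and roots_of_unity: "\<forall>c\<in>\<Sigma>. f c \<in> roots_of_unity_in (ring_of_integers F)"
    and closed: "\<forall>c\<in>\<Sigma>. \<forall>b\<in>\<Sigma>. refl B c (f c) b \<in> \<Sigma>"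
    using root_sys unfolding A_root_system_def Let_def by auto
  have "g \<in> gen_by ((\<lambda>c. refl B c (f c)) ` \<Sigma>)" using \<open>g \<in> G\<close> G by simp
  then show ?thesis using \<open>a \<in> \<Sigma>\<close>
  proof (induction g arbitrary: a rule: gen_by.induct)
    case (gen_mult s g)
    then show ?case using closed by auto
  next
    case (gen_inv s g)
    then obtain c where c: "c \<in> \<Sigma>" "s = refl B c (f c)" by blast
    have c0: "c \<noteq> 0" using c zero by blast
    obtain n where "n > 0" "f c ^ n = 1"
      using roots_of_unity c unfolding roots_of_unity_in_def by blast
    then have "Hilbert_Choice.inv s = refl B c (f c ^ (n - 1))" using inv_refl c0 c by simp
    then show ?case using refl_power_mem[OF c0] closed c gen_inv by auto
  qed simp
qed

end

lemma fspan_coeffs: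
  assumes "finite bs" "v \<in> fspan F bs" "0 \<in> F"
  obtains c where "v = (\<Sum>x\<in>bs. c x *s x)" "\<forall>x\<in>bs. c x \<in> F"
proof -
  obtain T c where T: "v = (\<Sum>x\<in>T. c x *s x)" "T \<subseteq> bs" "\<forall>x\<in>T. c x \<in> F"
    using assms(2) unfolding fspan_def by blast
  define c' where "c' x = (if x \<in> T then c x else 0)" for x
  have "(\<Sum>x\<in>bs. c' x *s x) = (\<Sum>x\<in>T. c x *s x)"
    by (rule sum.mono_neutral_cong_right[OF assms(1) T(2)]) (auto simp: c'_def)
  moreover have "\<forall>x\<in>bs. c' x \<in> F" using T(3) assms(3) by (auto simp: c'_def)
  ultimately show ?thesis using that[of c'] T(1) by simp
qed

lemma vec_coeffs_unique:
  assumes "finite bs" "vec.independent bs" "(\<Sum>x\<in>bs. c x *s x) = (\<Sum>x\<in>bs. c' x *s x)" "x \<in> bs"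
  shows "c x = c' x"
proof -
  have "(\<Sum>x\<in>bs. (c x - c' x) *s x) = 0"
    using assms(3) by (simp add: vec.scale_left_diff_distrib sum_subtractf)
  show ?thesis
  proof (rule ccontr)
    assume "c x \<noteq> c' x"
    then have "vec.dependent bs"
      unfolding vec.dependent_finite[OF assms(1)] using assms(4) \<open>(\<Sum>x\<in>bs. (c x - c' x) *s x) = 0\<close>
      by (intro exI[of _ "\<lambda>v. c v - c' v"]) auto
    then show False using assms(2) by simp
  qed
qed

lemma F_form_multiple_coeff:
  assumes U: "F_form F B U" and F: "subfield F"
    and "u \<in> U" "b \<in> U" "b \<noteq> 0" "u = l *s b"
  shows "l \<in> F"
proof -
  obtain bs where bs: "finite bs" "vec.independent bs" "U = fspan F bs"
    using U unfolding F_form_def by blast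
  have F_ops: "0 \<in> F" "\<forall>x\<in>F. \<forall>y\<in>F. x * y \<in> F" "\<forall>x\<in>F. x \<noteq> 0 \<longrightarrow> inverse x \<in> F"
    using F unfolding subfield_def by auto
  obtain \<beta> where \<beta>: "b = (\<Sum>x\<in>bs. \<beta> x *s x)" "\<forall>x\<in>bs. \<beta> x \<in> F"
    using fspan_coeffs[OF bs(1) _ F_ops(1)] assms(4) bs(3) by blast
  obtain \<alpha> where \<alpha>: "u = (\<Sum>x\<in>bs. \<alpha> x *s x)" "\<forall>x\<in>bs. \<alpha> x \<in> F"
    using fspan_coeffs[OF bs(1) _ F_ops(1)] assms(3) bs(3) by blast
  have "(\<Sum>x\<in>bs. \<alpha> x *s x) = (\<Sum>x\<in>bs. (l * \<beta> x) *s x)"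
    using assms(6) \<alpha>(1) \<beta>(1) by (simp add: vec.scale_sum_right)
  then have coeffs: "\<forall>x\<in>bs. \<alpha> x = l * \<beta> x"
    using vec_coeffs_unique[OF bs(1,2), of \<alpha> "\<lambda>x. l * \<beta> x"] by blast
  have "\<exists>x\<in>bs. \<beta> x \<noteq> 0"
  proof (rule ccontr)
    assume "\<not> (\<exists>x\<in>bs. \<beta> x \<noteq> 0)"
    then have "b = 0" using \<beta>(1) by simp
    then show False using assms(5) by simp
  qed
  then obtain x where x: "x \<in> bs" "\<beta> x \<noteq> 0" by blast
  then have "l = \<alpha> x * inverse (\<beta> x)" using coeffs by (simp add: field_simps)
  then show ?thesis using F_ops(2,3) \<alpha>(2) \<beta>(2) x by simp
qed

lemma A_root_system_multiple:
  assumes root_sys: "A_root_system F B U G \<Sigma> f" and U: "F_form F B U" and F: "subfield F"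
    and "b \<in> \<Sigma>" "l *s b \<in> \<Sigma>"
  shows "l \<in> roots_of_unity_in (ring_of_integers F)"
proof -
  have "\<Sigma> \<subseteq> U" "0 \<notin> \<Sigma>"
    and mult: "\<forall>a\<in>\<Sigma>. \<forall>c\<in>F. c *s a \<in> \<Sigma> \<longleftrightarrow> c \<in> roots_of_unity_in (ring_of_integers F)"
    using root_sys unfolding A_root_system_def Let_def by auto
  then have "l \<in> F" using F_form_multiple_coeff[OF U F] assms(4,5) by blast
  then show ?thesis using mult assms(4,5) by blast
qed

theorem theorem4:
  fixes B :: "complex ^ 'n::finite \<Rightarrow> complex ^ 'n \<Rightarrow> complex"
    and G P :: "(complex ^ 'n \<Rightarrow> complex ^ 'n) set"
    and F :: "complex set" and U \<Sigma> \<Phi> \<Delta> :: "(complex ^ 'n) set"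
    and f :: "complex ^ 'n \<Rightarrow> complex"
    and \<gamma> :: complex and h :: nat
  assumes form: "herm_form B"
    and G: "unitary_reflection_group B G"
    and F: "finite_abelian_ext F"
    and U: "F_form F B U"
    and root_sys: "A_root_system F B U G \<Sigma> f"
    and P_par: "parabolic G P"
    and P_cox: "coxeter_type P"
    and Phi_sub: "\<Phi> \<subseteq> {a\<in>\<Sigma>. \<exists>r\<in>P. is_reflection r \<and> vec.span {a} = root_line B r}"
    and Phi_real: "\<forall>a\<in>\<Phi>. \<forall>b\<in>\<Phi>. B a b \<in> \<real>"
    and Phi_lines: "\<forall>a\<in>\<Phi>. {x\<in>\<Phi>. \<exists>t::real. x = complex_of_real t *s a} = {a, - a}"
    and Phi_closed: "\<forall>a\<in>\<Phi>. refl B a (-1) ` \<Phi> = \<Phi>"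
    and P_gen: "P = gen_by ((\<lambda>a. refl B a (-1)) ` \<Phi>)"
    and P_refls: "{g\<in>P. is_reflection g} = (\<lambda>a. refl B a (-1)) ` \<Phi>"
    and h_pos: "h > 0" and h_odd: "odd h"
    and gamma_ord: "\<gamma> ^ h = 1" "\<forall>k. 0 < k \<and> k < h \<longrightarrow> \<gamma> ^ k \<noteq> 1"
    and mu: "roots_of_unity_in (ring_of_integers F) = {s * \<gamma> ^ i | s i. s \<in> {1, -1} \<and> i < h}"
    and Delta: "simple_system \<Phi> \<Delta>"
  shows "complement_in (normaliser G P) P
           {g\<in>G. g ` {\<gamma> ^ i *s d | i d. i < h \<and> d \<in> \<Delta>} = {\<gamma> ^ i *s d | i d. i < h \<and> d \<in> \<Delta>}}"
proof -
  interpret hermitian_form B by (rule hermitian_form.intro[OF form])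
  obtain X where P_fixer: "P = {g\<in>G. \<forall>v\<in>X. g v = v}" using P_par unfolding parabolic_def by blast
  have roots_Sigma: "\<Phi> \<subseteq> \<Sigma>" using Phi_sub by blast
  moreover have "0 \<notin> \<Sigma>" using root_sys unfolding A_root_system_def Let_def by blast
  ultimately have zero_not_root: "0 \<notin> \<Phi>" by blast
  have "finite G" using G unfolding unitary_reflection_group_def by blast
  moreover have "R ` \<Phi> \<subseteq> G" using P_refls P_fixer by blast
  ultimately have "finite (R ` \<Phi>)" by (rule finite_subset[rotated])
  then have finite_roots: "finite \<Phi>"
    by (rule finite_roots_if_finite_reflections[OF _ zero_not_root Phi_real Phi_lines])
  have "subfield F" using F unfolding finite_abelian_ext_def by blast
  have Sigma_multiple: "l \<in> {s * \<gamma> ^ i | s i. s \<in> {1, -1} \<and> i < h}" if "b \<in> \<Sigma>" "l *s b \<in> \<Sigma>" for b l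
    using A_root_system_multiple[OF root_sys U \<open>subfield F\<close> that] mu by simp
  interpret parabolic_setting B \<Phi> G P X \<Sigma> \<Delta> \<gamma> h
    by unfold_locales
      (fact form finite_roots zero_not_root Phi_real Phi_lines Phi_closed G P_fixer P_gen P_refls
        Delta h_odd gamma_ord(1) A_root_system_image[OF root_sys] roots_Sigma Sigma_multiple)+
  show ?thesis using complement_H unfolding H_def Delta_tilde_def .
qed

end
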